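(* In the Bayesian $k$-armed bandit problem described in the context, suppose every $P_\mu$ is $1$-subgaussian and that the Seq-Greedy algorithm is executed with parameter $\upsilon=2\delta$, where $\delta>0$. Then for any integer $1\le k_1\le k$, $$BR_{T,k}(\text{Seq-Greedy})\le T\Bigl(1-\mathbb{E}_\Gamma\bigl[\mathbf 1(\mu\ge1-\delta)q_{1-2\delta}(\mu)\bigr]\Bigr)^{k_1}+3T\delta+k_1\mathbb{E}_\Gamma\Bigl[\mathbf 1(\mu<1-3\delta)\min\Bigl(1+\frac{3}{C_1(1-2\delta-\mu)},\,T(1-\mu)\Bigr)\Bigr],$$ where $C_1=(1-e^{-1})/2$.
   Context: Bayesian $k$-armed bandit: horizon $T$, arms $[k]$, family $\{P_\mu:\mu\in[0,1]\}$ with $P_\mu$ of mean $\mu$; prior $\Gamma$ on $[0,1]$ with density; means $\mu_1,\dots,\mu_k$ i.i.d. $\sim\Gamma$; pulling arm $i$ at time $t$ gives $Y_{it}\sim P_{\mu_i}$ independently, only the pulled reward observed. $R_T(\pi\mid\bm\mu)=T\max_i\mu_i-\sum_t\mathbb{E}[\mu_{a_t}\mid\pi]$, $BR_{T,k}(\pi)=\mathbb{E}[R_T(\pi\mid\bm\mu)]$. $1$-subgaussian: $\mathbb{E}[e^{s(Z-\mu)}]\le e^{s^2/2}$ for $Z\sim P_\mu$. $\hat\mu_j(t)$ is the empirical mean reward of arm $j$ up to time $t$. Seq-Greedy with input $\upsilon$: set $i=1$ and pull arm $1$ at $t=1$; for each $t\ge2$: if $\hat\mu_i(t-1)\ge1-\upsilon$,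 pull arm $i$; else if $i<k$, pull arm $i+1$ and set $i\leftarrow i+1$; else pull $\arg\max_j\hat\mu_j(t-1)$. For $\mu>\theta$, with $X_n$ i.i.d. $\sim P_\mu$ and $M_n=\frac1n\sum_{i\le n}X_i$, $q_\theta(\mu)=\mathbb{P}[M_n>\theta\ \forall n\ge1]$. *)

theory Defs
  imports "HOL-Probability.Probability"
begin

text \<open>Rewards are held in a table Y indexed by (arm, time): pulling arm i at time t
  reveals Y (i, t).  A history hs lists the arms pulled at times 1, 2, ...,
  i.e. hs ! s is the arm pulled at time s+1.\<close>

definition emp_mean :: "(nat \<times> nat \<Rightarrow> real) \<Rightarrow> nat list \<Rightarrow> nat \<Rightarrow> real" where
  "emp_mean Y hs j =
     (\<Sum>s<length hs. if hs ! s = j then Y (j, Suc s) else 0)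
       / real (card {s. s < length hs \<and> hs ! s = j})"

text \<open>State of Seq-Greedy after t rounds: (arms pulled at times 1..t, current index i).
  Ties in the arg max are broken towards the smallest arm index.\<close>

fun sg_run :: "real \<Rightarrow> nat \<Rightarrow> (nat \<times> nat \<Rightarrow> real) \<Rightarrow> nat \<Rightarrow> nat list \<times> nat" where
  "sg_run \<upsilon> k Y 0 = ([], 1)"
| "sg_run \<upsilon> k Y (Suc t) =
     (case sg_run \<upsilon> k Y t of (hs, i) \<Rightarrow>
        if t = 0 then ([1], 1)
        else if emp_mean Y hs i \<ge> 1 - \<upsilon> then (hs @ [i], i)
        else if i < k then (hs @ [Suc i], Suc i)
        else (hs @ [LEAST j. j \<in> {1..k} \<and>
                      (\<forall>j'\<in>{1..k}. emp_mean Y hs j' \<le> emp_mean Y hs j)], i))"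

definition sg_arm :: "real \<Rightarrow> nat \<Rightarrow> (nat \<times> nat \<Rightarrow> real) \<Rightarrow> nat \<Rightarrow> nat" where
  "sg_arm \<upsilon> k Y t = fst (sg_run \<upsilon> k Y t) ! (t - 1)"

definition reward_table ::
  "(real \<Rightarrow> real measure) \<Rightarrow> nat \<Rightarrow> nat \<Rightarrow> (nat \<Rightarrow> real) \<Rightarrow> (nat \<times> nat \<Rightarrow> real) measure" where
  "reward_table P k T m = (\<Pi>\<^sub>M it\<in>{1..k} \<times> {1..T}. P (m (fst it)))"

definition sg_regret ::
  "(real \<Rightarrow> real measure) \<Rightarrow> real \<Rightarrow> nat \<Rightarrow> nat \<Rightarrow> (nat \<Rightarrow> real) \<Rightarrow> real" where
  "sg_regret P \<upsilon> k T m =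
     real T * Max (m ` {1..k})
     - (\<Sum>t\<in>{1..T}. \<integral>Y. m (sg_arm \<upsilon> k Y t) \<partial>reward_table P k T m)"

definition sg_BR ::
  "real measure \<Rightarrow> (real \<Rightarrow> real measure) \<Rightarrow> real \<Rightarrow> nat \<Rightarrow> nat \<Rightarrow> real" where
  "sg_BR \<Gamma> P \<upsilon> k T = (\<integral>m. sg_regret P \<upsilon> k T m \<partial>(\<Pi>\<^sub>M i\<in>{1..k}. \<Gamma>))"

definition q_prob :: "(real \<Rightarrow> real measure) \<Rightarrow> real \<Rightarrow> real \<Rightarrow> real" where
  "q_prob P \<theta> \<mu> =
     measure (\<Pi>\<^sub>M n\<in>(UNIV::nat set). P \<mu>)
       {x \<in> space (\<Pi>\<^sub>M n\<in>(UNIV::nat set). P \<mu>).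
          \<forall>n\<ge>1. (\<Sum>i<n. x i) / real n > \<theta>}"

end

theory Submission
  imports Defs
begin

(*
  Seq-Greedy consumes the samples of every arm consecutively, so its trajectory is a
  deterministic function of the reward table read arm by arm: arm j + 1 is pulled from round
  arm_start j on until the running mean of its own samples drops below 1 - 2\<delta>, and arm_start j
  depends on the arms 1..j only.

  An arm whose mean is at least 1 - \<delta> and whose running mean never drops below 1 - 2\<delta> is kept
  until the horizon. Once such an arm exists among the first k1 arms, a round costs at most 3\<delta>
  unless it is spent on an arm of mean \<mu> < 1 - 3\<delta>; by the independence of the arms, no such arm
  exists with probability at most (1 - E[1(\<mu> \<ge> 1 - \<delta>) q(\<mu>)])^k1, and then the loss is at most T.
  An arm of mean \<mu> < 1 - 3\<delta> is pulled after n of its samples only if their mean is still at least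
  1 - 2\<delta>, which by the subgaussian Chernoff bound has probability exp (- n (1 - 2\<delta> - \<mu>)^2 / 2);
  summing the geometric series bounds its expected number of pulls. Averaging over the i.i.d.
  prior gives the theorem.
*)

section \<open>Seq-Greedy reads the reward table arm by arm\<close>

definition sample_mean :: "(nat \<times> nat \<Rightarrow> real) \<Rightarrow> nat \<Rightarrow> nat \<Rightarrow> nat \<Rightarrow> real" where
  "sample_mean Y i s n = (\<Sum>r<n. Y (i, s + r)) / real n"

lemma sample_mean_restrict:
  "n \<le> L \<Longrightarrow> sample_mean Y i s n = (\<Sum>r<n. (\<lambda>r\<in>{..<L}. Y (i, s + r)) r) / real n"
  unfolding sample_mean_def by (intro arg_cong[where f = "\<lambda>x. x / real n"] sum.cong) auto

definition stay_length :: "nat \<Rightarrow> real \<Rightarrow> (nat \<times> nat \<Rightarrow> real) \<Rightarrow> nat \<Rightarrow> nat \<Rightarrow> nat" where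
  "stay_length T \<theta> Y i s = (LEAST n. 0 < n \<and> (n \<le> T \<longrightarrow> sample_mean Y i s n < \<theta>))"

lemma stay_length_pos: "0 < stay_length T \<theta> Y i s"
  and stay_length_le: "stay_length T \<theta> Y i s \<le> Suc T"
  and sample_mean_at_stay_length:
    "stay_length T \<theta> Y i s \<le> T \<Longrightarrow> sample_mean Y i s (stay_length T \<theta> Y i s) < \<theta>"
proof -
  let ?P = "\<lambda>n. 0 < n \<and> (n \<le> T \<longrightarrow> sample_mean Y i s n < \<theta>)"
  have "?P (Suc T)" by simp
  then show "0 < stay_length T \<theta> Y i s" "stay_length T \<theta> Y i s \<le> Suc T"
    "stay_length T \<theta> Y i s \<le> T \<Longrightarrow> sample_mean Y i s (stay_length T \<theta> Y i s) < \<theta>"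
    unfolding stay_length_def by (metis (mono_tags, lifting) LeastI Least_le)+
qed

lemma sample_mean_before_stay_length:
  assumes "0 < n" "n < stay_length T \<theta> Y i s"
  shows "n \<le> T" "\<theta> \<le> sample_mean Y i s n"
  using not_less_Least[OF assms(2)[unfolded stay_length_def]] assms(1) by auto

text \<open>Seq-Greedy with \<open>1 - \<upsilon> = \<theta>\<close> first pulls arm \<open>j + 1\<close> in round \<open>arm_start T \<theta> Y j\<close>
  (as long as it has arms left).\<close>

primrec arm_start :: "nat \<Rightarrow> real \<Rightarrow> (nat \<times> nat \<Rightarrow> real) \<Rightarrow> nat \<Rightarrow> nat" where
  "arm_start T \<theta> Y 0 = 1"
| "arm_start T \<theta> Y (Suc j) = arm_start T \<theta> Y j + stay_length T \<theta> Y (Suc j) (arm_start T \<theta> Y j)"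

definition scheduled_arm :: "nat \<Rightarrow> real \<Rightarrow> (nat \<times> nat \<Rightarrow> real) \<Rightarrow> nat \<Rightarrow> nat" where
  "scheduled_arm T \<theta> Y t = Suc (LEAST j. t < arm_start T \<theta> Y (Suc j))"

lemma strict_mono_arm_start: "strict_mono (arm_start T \<theta> Y)"
  by (simp add: strict_mono_Suc_iff stay_length_pos)

lemma arm_start_pos: "0 < arm_start T \<theta> Y j"
  by (induction j) auto

lemma arm_start_le: "arm_start T \<theta> Y j \<le> 1 + j * Suc T"
proof (induction j)
  case (Suc j)
  then show ?case using stay_length_le[of T \<theta> Y "Suc j" "arm_start T \<theta> Y j"] by simp
qed simp

lemma strict_mono_Least_less_eq_iff:
  fixes f :: "nat \<Rightarrow> nat"
  assumes f: "strict_mono f" and t: "f 0 \<le> t"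
  shows "(LEAST j. t < f (Suc j)) = j \<longleftrightarrow> f j \<le> t \<and> t < f (Suc j)"
proof
  have "t < f (Suc t)" using seq_suble[OF f, of "Suc t"] by simp
  then have lt: "t < f (Suc (LEAST j. t < f (Suc j)))" by (rule LeastI)
  assume "(LEAST j. t < f (Suc j)) = j"
  moreover have "f (LEAST j. t < f (Suc j)) \<le> t"
  proof (cases "LEAST j. t < f (Suc j)")
    case (Suc i)
    then show ?thesis using not_less_Least[of i "\<lambda>j. t < f (Suc j)"] by simp
  qed (simp add: t)
  ultimately show "f j \<le> t \<and> t < f (Suc j)" using lt by simp
next
  assume j: "f j \<le> t \<and> t < f (Suc j)"
  show "(LEAST j. t < f (Suc j)) = j"
  proof (rule Least_equality)
    show "j \<le> i" if "t < f (Suc i)" for i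
      using j that strict_mono_less_eq[OF f, of "Suc i" j] by linarith
  qed (use j in simp)
qed

lemma scheduled_arm_eq_Suc_iff:
  "0 < t \<Longrightarrow> scheduled_arm T \<theta> Y t = Suc j
    \<longleftrightarrow> arm_start T \<theta> Y j \<le> t \<and> t < arm_start T \<theta> Y (Suc j)"
  unfolding scheduled_arm_def
  using strict_mono_Least_less_eq_iff[OF strict_mono_arm_start, of T \<theta> Y t j] by simp

lemma scheduled_arm_le:
  "t < arm_start T \<theta> Y (Suc j) \<Longrightarrow> scheduled_arm T \<theta> Y t \<le> Suc j"
  unfolding scheduled_arm_def by (simp add: Least_le)

lemma scheduled_arm_block:
  assumes "0 < t"
  obtains j where "scheduled_arm T \<theta> Y t = Suc j"
    "arm_start T \<theta> Y j \<le> t" "t < arm_start T \<theta> Y (Suc j)"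
  using scheduled_arm_eq_Suc_iff[OF assms] by (metis scheduled_arm_def)

lemma emp_mean_schedule:
  assumes j: "arm_start T \<theta> Y j \<le> t" "t < arm_start T \<theta> Y (Suc j)"
  shows "emp_mean Y (map (scheduled_arm T \<theta> Y) [1..<Suc t]) (Suc j)
    = sample_mean Y (Suc j) (arm_start T \<theta> Y j) (Suc t - arm_start T \<theta> Y j)"
proof -
  let ?s = "arm_start T \<theta> Y j" and ?hs = "map (scheduled_arm T \<theta> Y) [1..<Suc t]"
  have s_pos: "0 < ?s" by (rule arm_start_pos)
  have pulls: "{r. r < length ?hs \<and> ?hs ! r = Suc j} = {?s - 1..<t}"
  proof -
    have "?hs ! r = Suc j \<longleftrightarrow> ?s - 1 \<le> r" if "r < t" for r
      using that j s_pos by (auto simp: nth_map_upt scheduled_arm_eq_Suc_iff simp del: upt_Suc)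
    then show ?thesis by auto
  qed
  have "(\<Sum>r<length ?hs. if ?hs ! r = Suc j then Y (Suc j, Suc r) else 0)
      = (\<Sum>r\<in>{?s - 1..<t}. Y (Suc j, Suc r))"
    by (simp only: sum.inter_filter[symmetric] pulls[symmetric] finite_lessThan) (simp add: lessThan_def)
  also have "\<dots> = (\<Sum>r<Suc t - ?s. Y (Suc j, ?s + r))"
    using s_pos j by (subst sum.atLeastLessThan_shift_0) (auto simp: lessThan_atLeast0 intro!: sum.cong)
  finally show ?thesis
    unfolding emp_mean_def sample_mean_def pulls using s_pos j by simp
qed

lemma sg_run_Suc_schedule:
  assumes run: "sg_run \<upsilon> k Y t
      = (map (scheduled_arm T (1 - \<upsilon>) Y) [1..<Suc t], scheduled_arm T (1 - \<upsilon>) Y t)"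
    and t: "0 < t" "Suc t \<le> T" "Suc t < arm_start T (1 - \<upsilon>) Y k"
  shows "sg_run \<upsilon> k Y (Suc t)
      = (map (scheduled_arm T (1 - \<upsilon>) Y) [1..<Suc (Suc t)], scheduled_arm T (1 - \<upsilon>) Y (Suc t))"
proof -
  let ?start = "arm_start T (1 - \<upsilon>) Y" and ?hs = "map (scheduled_arm T (1 - \<upsilon>) Y) [1..<Suc t]"
  obtain j where j: "scheduled_arm T (1 - \<upsilon>) Y t = Suc j" "?start j \<le> t" "t < ?start (Suc j)"
    using scheduled_arm_block[OF t(1)] .
  have mean: "emp_mean Y ?hs (Suc j) = sample_mean Y (Suc j) (?start j) (Suc t - ?start j)"
    using emp_mean_schedule[OF j(2,3)] .
  show ?thesis
  proof (cases "Suc t < ?start (Suc j)")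
    case True
    then have "1 - \<upsilon> \<le> emp_mean Y ?hs (Suc j)"
      unfolding mean using j by (intro sample_mean_before_stay_length(2)[where T = T]) auto
    moreover have "scheduled_arm T (1 - \<upsilon>) Y (Suc t) = Suc j"
      using True j by (simp add: scheduled_arm_eq_Suc_iff)
    ultimately show ?thesis using run t(1) j(1) by simp
  next
    case False
    then have start: "?start (Suc j) = Suc t" using j(3) by simp
    then have "stay_length T (1 - \<upsilon>) Y (Suc j) (?start j) = Suc t - ?start j" by simp
    then have "emp_mean Y ?hs (Suc j) < 1 - \<upsilon>"
      unfolding mean using sample_mean_at_stay_length t(2) by (metis diff_le_self le_trans)
    moreover have "Suc j < k"
      using t(3) start strict_mono_less_eq[OF strict_mono_arm_start, of T "1 - \<upsilon>" Y k "Suc j"]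
      by linarith
    moreover have "scheduled_arm T (1 - \<upsilon>) Y (Suc t) = Suc (Suc j)"
      using start stay_length_pos by (simp add: scheduled_arm_eq_Suc_iff)
    ultimately show ?thesis using run t(1) j(1) by simp
  qed
qed

lemma sg_run_schedule:
  "0 < t \<Longrightarrow> t \<le> T \<Longrightarrow> t < arm_start T (1 - \<upsilon>) Y k \<Longrightarrow>
    sg_run \<upsilon> k Y t = (map (scheduled_arm T (1 - \<upsilon>) Y) [1..<Suc t], scheduled_arm T (1 - \<upsilon>) Y t)"
proof (induction t)
  case (Suc t)
  show ?case
  proof (cases "t = 0")
    case True
    have "scheduled_arm T (1 - \<upsilon>) Y (Suc 0) = Suc 0"
      using stay_length_pos by (simp add: scheduled_arm_eq_Suc_iff)
    then show ?thesis using True by simp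
  next
    case False
    then show ?thesis using Suc by (intro sg_run_Suc_schedule) auto
  qed
qed simp

lemma sg_arm_eq_scheduled_arm:
  "0 < t \<Longrightarrow> t \<le> T \<Longrightarrow> t < arm_start T (1 - \<upsilon>) Y k \<Longrightarrow>
    sg_arm \<upsilon> k Y t = scheduled_arm T (1 - \<upsilon>) Y t"
  by (simp add: sg_arm_def sg_run_schedule nth_map_upt del: upt_Suc)

lemma Least_arg_max_in:
  fixes e :: "nat \<Rightarrow> 'a::linorder"
  assumes "finite A" "A \<noteq> {}"
  shows "(LEAST j. j \<in> A \<and> (\<forall>j'\<in>A. e j' \<le> e j)) \<in> A"
proof -
  have "Max (e ` A) \<in> e ` A" using assms by simp
  then obtain j where "j \<in> A" "e j = Max (e ` A)" by auto
  then have "j \<in> A \<and> (\<forall>j'\<in>A. e j' \<le> e j)" using assms(1) by simp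
  then show ?thesis by (rule LeastI2) simp
qed

lemma sg_run_arms:
  assumes "0 < k"
  shows "length (fst (sg_run \<upsilon> k Y t)) = t \<and> set (fst (sg_run \<upsilon> k Y t)) \<subseteq> {1..k}
    \<and> snd (sg_run \<upsilon> k Y t) \<in> {1..k}"
proof (induction t)
  case (Suc t)
  obtain hs i where run: "sg_run \<upsilon> k Y t = (hs, i)" by fastforce
  have "(LEAST j. j \<in> {1..k} \<and> (\<forall>j'\<in>{1..k}. emp_mean Y hs j' \<le> emp_mean Y hs j)) \<in> {1..k}"
    using assms by (intro Least_arg_max_in) auto
  then show ?case using Suc.IH assms by (simp add: run)
qed (use assms in simp)

lemma sg_arm_in_arms: "0 < k \<Longrightarrow> 0 < t \<Longrightarrow> sg_arm \<upsilon> k Y t \<in> {1..k}"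
proof -
  assume "0 < k" "0 < t"
  then have "t - 1 < length (fst (sg_run \<upsilon> k Y t))" "set (fst (sg_run \<upsilon> k Y t)) \<subseteq> {1..k}"
    using sg_run_arms[of k \<upsilon> Y t] by auto
  then show ?thesis unfolding sg_arm_def by (meson nth_mem subsetD)
qed

definition stays_above :: "nat \<Rightarrow> real \<Rightarrow> (nat \<times> nat \<Rightarrow> real) \<Rightarrow> nat \<Rightarrow> nat \<Rightarrow> bool" where
  "stays_above T \<theta> Y i s \<longleftrightarrow> (\<forall>n. 0 < n \<longrightarrow> s + n \<le> T \<longrightarrow> \<theta> \<le> sample_mean Y i s n)"

lemma stays_above_imp_horizon_lt:
  assumes "stays_above T \<theta> Y (Suc j) (arm_start T \<theta> Y j)"
  shows "T < arm_start T \<theta> Y (Suc j)"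
proof (rule ccontr)
  let ?s = "arm_start T \<theta> Y j" and ?n = "stay_length T \<theta> Y (Suc j) (arm_start T \<theta> Y j)"
  assume "\<not> T < arm_start T \<theta> Y (Suc j)"
  then have le: "?s + ?n \<le> T" by simp
  then have "\<theta> \<le> sample_mean Y (Suc j) ?s ?n"
    using assms stay_length_pos by (simp add: stays_above_def)
  moreover have "sample_mean Y (Suc j) ?s ?n < \<theta>" using le by (intro sample_mean_at_stay_length) simp
  ultimately show False by simp
qed

definition visits :: "nat \<Rightarrow> real \<Rightarrow> (nat \<times> nat \<Rightarrow> real) \<Rightarrow> nat \<Rightarrow> nat" where
  "visits T \<theta> Y j = card {t \<in> {1..T}. arm_start T \<theta> Y j \<le> t \<and> t < arm_start T \<theta> Y (Suc j)}"

lemma visits_le: "visits T \<theta> Y j \<le> T"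
proof -
  have "visits T \<theta> Y j \<le> card {1..T}" unfolding visits_def by (intro card_mono) auto
  then show ?thesis by simp
qed

text \<open>After its first round, arm \<open>j + 1\<close> is pulled again after \<open>n\<close> of its samples only if
  their mean is still at least \<open>\<theta>\<close>.\<close>

lemma visits_le_card_high_means:
  "visits T \<theta> Y j \<le> 1 + card {n \<in> {1..T}. arm_start T \<theta> Y j + n \<le> T
      \<and> \<theta> \<le> sample_mean Y (Suc j) (arm_start T \<theta> Y j) n}"
proof -
  let ?s = "arm_start T \<theta> Y j"
  let ?N = "{n \<in> {1..T}. ?s + n \<le> T \<and> \<theta> \<le> sample_mean Y (Suc j) ?s n}"
  have "{t \<in> {1..T}. ?s \<le> t \<and> t < arm_start T \<theta> Y (Suc j)} \<subseteq> insert ?s ((\<lambda>n. ?s + n) ` ?N)"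
  proof
    fix t assume t: "t \<in> {t \<in> {1..T}. ?s \<le> t \<and> t < arm_start T \<theta> Y (Suc j)}"
    show "t \<in> insert ?s ((\<lambda>n. ?s + n) ` ?N)"
    proof (cases "t = ?s")
      case False
      then have "0 < t - ?s" "t - ?s < stay_length T \<theta> Y (Suc j) ?s" using t by auto
      then have "t - ?s \<in> ?N" using t sample_mean_before_stay_length(2)[of "t - ?s"] by auto
      then show ?thesis using t by (auto intro: image_eqI[of _ _ "t - ?s"])
    qed simp
  qed
  then have "visits T \<theta> Y j \<le> card (insert ?s ((\<lambda>n. ?s + n) ` ?N))"
    unfolding visits_def by (intro card_mono) auto
  also have "\<dots> \<le> Suc (card ((\<lambda>n. ?s + n) ` ?N))" by (rule card_insert_le_m1) auto
  also have "\<dots> \<le> 1 + card ?N" using card_image_le[of ?N "\<lambda>n. ?s + n"] by simp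
  finally show ?thesis .
qed

lemma sum_in_block_eq_visits:
  "(\<Sum>t\<in>{1..T}. of_bool (arm_start T \<theta> Y j \<le> t \<and> t < arm_start T \<theta> Y (Suc j)) :: real)
    = real (visits T \<theta> Y j)"
  by (simp add: visits_def Int_def)

context
  fixes N :: "(nat \<times> nat \<Rightarrow> real) measure"
  assumes measurable_reward[measurable]: "\<And>x. (\<lambda>Y. Y x) \<in> borel_measurable N"
begin

lemma measurable_sample_mean[measurable]: "(\<lambda>Y. sample_mean Y i s n) \<in> borel_measurable N"
  unfolding sample_mean_def by measurable

lemma measurable_stay_length[measurable]:
  "(\<lambda>Y. stay_length T \<theta> Y i s) \<in> N \<rightarrow>\<^sub>M count_space UNIV"
  unfolding stay_length_def by measurable

lemma measurable_arm_start[measurable]: "(\<lambda>Y. arm_start T \<theta> Y j) \<in> N \<rightarrow>\<^sub>M count_space UNIV"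
proof (induction j)
  case (Suc j)
  have "(\<lambda>Y. (\<lambda>s Y. s + stay_length T \<theta> Y (Suc j) s) (arm_start T \<theta> Y j) Y)
      \<in> N \<rightarrow>\<^sub>M count_space UNIV"
    by (rule measurable_compose_countable[OF _ Suc]) measurable
  then show ?case by simp
qed simp

lemma measurable_stays_above[measurable]: "Measurable.pred N (\<lambda>Y. stays_above T \<theta> Y i s)"
  unfolding stays_above_def by measurable

lemma measurable_emp_mean[measurable]: "(\<lambda>Y. emp_mean Y hs i) \<in> borel_measurable N"
  unfolding emp_mean_def by measurable

lemma measurable_sg_run[measurable]: "(\<lambda>Y. sg_run \<upsilon> k Y t) \<in> N \<rightarrow>\<^sub>M count_space UNIV"
proof (induction t)
  case (Suc t)
  let ?step = "\<lambda>(hs, i) Y. if t = 0 then ([1], 1)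
        else if emp_mean Y hs i \<ge> 1 - \<upsilon> then (hs @ [i], i)
        else if i < k then (hs @ [Suc i], Suc i)
        else (hs @ [LEAST j. j \<in> {1..k} \<and> (\<forall>j'\<in>{1..k}. emp_mean Y hs j' \<le> emp_mean Y hs j)], i)"
  have "(\<lambda>Y. ?step (sg_run \<upsilon> k Y t) Y) \<in> N \<rightarrow>\<^sub>M count_space UNIV"
  proof (rule measurable_compose_countable[OF _ Suc])
    fix p :: "nat list \<times> nat"
    obtain hs i where p: "p = (hs, i)" by fastforce
    have [measurable]: "Measurable.pred N (\<lambda>Y. emp_mean Y hs a \<le> emp_mean Y hs b)" for a b
      unfolding pred_def by (intro borel_measurable_le measurable_emp_mean)
    have [measurable]: "(\<lambda>Y. LEAST j. j \<in> {1..k} \<and> (\<forall>j'\<in>{1..k}. emp_mean Y hs j' \<le> emp_mean Y hs j))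
        \<in> N \<rightarrow>\<^sub>M count_space UNIV"
      by measurable
    have [measurable]: "(\<lambda>Y. (hs @ [LEAST j. j \<in> {1..k} \<and> (\<forall>j'\<in>{1..k}. emp_mean Y hs j' \<le> emp_mean Y hs j)], i))
        \<in> N \<rightarrow>\<^sub>M count_space UNIV"
      by measurable
    show "(\<lambda>Y. ?step p Y) \<in> N \<rightarrow>\<^sub>M count_space UNIV"
      unfolding p prod.case by measurable
  qed
  then show ?case by (simp add: case_prod_beta)
qed simp

lemma measurable_sg_arm[measurable]: "(\<lambda>Y. sg_arm \<upsilon> k Y t) \<in> N \<rightarrow>\<^sub>M count_space UNIV"
  unfolding sg_arm_def by measurable

end

lemma measurable_visits[measurable]:
  assumes [measurable]: "\<And>x. (\<lambda>Y. Y x) \<in> borel_measurable N"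
  shows "(\<lambda>Y. visits T \<theta> Y j) \<in> N \<rightarrow>\<^sub>M count_space UNIV"
  unfolding visits_def by measurable

definition depends_only_on_arms :: "nat set \<Rightarrow> ((nat \<times> nat \<Rightarrow> real) \<Rightarrow> 'a) \<Rightarrow> bool" where
  "depends_only_on_arms S F \<longleftrightarrow> (\<forall>Y Y'. (\<forall>i\<in>S. \<forall>u. Y (i, u) = Y' (i, u)) \<longrightarrow> F Y = F Y')"

lemma depends_only_on_armsD:
  "depends_only_on_arms S F \<Longrightarrow> (\<And>i u. i \<in> S \<Longrightarrow> Y (i, u) = Y' (i, u)) \<Longrightarrow> F Y = F Y'"
  unfolding depends_only_on_arms_def by blast

lemma depends_only_on_arms_comp:
  "depends_only_on_arms S F \<Longrightarrow> depends_only_on_arms S (\<lambda>Y. G (F Y))"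
  unfolding depends_only_on_arms_def by metis

lemma depends_only_on_arms_combine:
  "depends_only_on_arms S F \<Longrightarrow> depends_only_on_arms S G \<Longrightarrow> depends_only_on_arms S (\<lambda>Y. H (F Y) (G Y))"
  unfolding depends_only_on_arms_def by metis

lemma depends_only_on_arms_sample_mean: "depends_only_on_arms {i} (\<lambda>Y. sample_mean Y i s n)"
  by (simp add: depends_only_on_arms_def sample_mean_def)

lemma depends_only_on_arms_stays_above: "depends_only_on_arms {i} (\<lambda>Y. stays_above T \<theta> Y i s)"
  by (simp add: depends_only_on_arms_def stays_above_def sample_mean_def)

lemma depends_only_on_arms_arm_start: "depends_only_on_arms {1..j} (\<lambda>Y. arm_start T \<theta> Y j)"
proof (induction j)
  case (Suc j)
  show ?case unfolding depends_only_on_arms_def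
  proof (intro allI impI)
    fix Y Y' :: "nat \<times> nat \<Rightarrow> real"
    assume agree: "\<forall>i\<in>{1..Suc j}. \<forall>u. Y (i, u) = Y' (i, u)"
    then have "arm_start T \<theta> Y j = arm_start T \<theta> Y' j"
      by (intro depends_only_on_armsD[OF Suc]) auto
    moreover have "stay_length T \<theta> Y (Suc j) s = stay_length T \<theta> Y' (Suc j) s" for s
      using agree by (simp add: stay_length_def sample_mean_def)
    ultimately show "arm_start T \<theta> Y (Suc j) = arm_start T \<theta> Y' (Suc j)" by simp
  qed
qed (simp add: depends_only_on_arms_def)

lemma measurable_component_PiM_borel:
  assumes "\<And>x. x \<in> A \<Longrightarrow> sets (M x) = sets borel"
  shows "(\<lambda>Y. Y x) \<in> borel_measurable (PiM A M)"
proof (cases "x \<in> A")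
  case True
  then have "(\<lambda>Y. Y x) \<in> PiM A M \<rightarrow>\<^sub>M M x" by (rule measurable_component_singleton)
  then show ?thesis using measurable_cong_sets[of "PiM A M" "PiM A M" "M x" borel] assms[OF True]
    by simp
next
  case False
  then have "Y x = undefined" if "Y \<in> space (PiM A M)" for Y
    using that by (auto simp: space_PiM PiE_def extensional_def)
  then show ?thesis by (subst measurable_cong[where g = "\<lambda>Y. undefined"]) auto
qed

lemma measure_PiM_restrict_indep:
  fixes M :: "'i \<Rightarrow> real measure"
  assumes prob: "\<And>x. x \<in> I \<Longrightarrow> prob_space (M x)"
    and "I \<noteq> {}" "A \<inter> B = {}" "A \<subseteq> I" "B \<subseteq> I"
    and Xa: "Xa \<in> sets (PiM A M)" and Xb: "Xb \<in> sets (PiM B M)"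
  shows "measure (PiM I M) {Y \<in> space (PiM I M). restrict Y A \<in> Xa \<and> restrict Y B \<in> Xb}
       = measure (PiM I M) {Y \<in> space (PiM I M). restrict Y A \<in> Xa}
         * measure (PiM I M) {Y \<in> space (PiM I M). restrict Y B \<in> Xb}"
proof -
  interpret prob_space "PiM I M" by (rule prob_space_PiM) (rule prob)
  have "distr (PiM I M) (PiM I M) (\<lambda>Y. \<lambda>x\<in>I. Y x) = distr (PiM I M) (PiM I M) (\<lambda>Y. Y)"
    by (rule distr_cong) (auto simp: space_PiM PiE_def extensional_def restrict_def fun_eq_iff)
  moreover have "(\<Pi>\<^sub>M x\<in>I. distr (PiM I M) (M x) (\<lambda>Y. Y x)) = PiM I M"
    by (rule PiM_cong) (auto simp: distr_PiM_component prob)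
  moreover have "random_variable (M x) (\<lambda>Y. Y x)" if "x \<in> I" for x
    using that by (rule measurable_component_singleton)
  ultimately have "indep_vars M (\<lambda>x Y. Y x) I"
    using indep_vars_iff_distr_eq_PiM'[where I = I and M' = M and X = "\<lambda>x Y. Y x"] \<open>I \<noteq> {}\<close>
    by simp
  from indep_var_restrict[OF this assms(3-5)]
  have "indep_var (PiM A M) (\<lambda>Y. restrict Y A) (PiM B M) (\<lambda>Y. restrict Y B)" by simp
  from indep_varD[OF this Xa Xb] show ?thesis by (simp add: vimage_def Int_def conj_commute)
qed

definition subgaussian :: "real measure \<Rightarrow> real \<Rightarrow> bool" where
  "subgaussian M \<mu> \<longleftrightarrow>
    (\<forall>s. integrable M (\<lambda>z. exp (s * (z - \<mu>))) \<and> (\<integral>z. exp (s * (z - \<mu>)) \<partial>M) \<le> exp (s\<^sup>2 / 2))"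

lemma subgaussian_sample_mean_tail:
  assumes M: "prob_space M" "sets M = sets borel" and subg: "subgaussian M \<mu>"
    and lt: "\<mu> < \<theta>" and n: "0 < n"
  shows "measure (PiM {..<n} (\<lambda>_. M)) {x \<in> space (PiM {..<n} (\<lambda>_. M)). \<theta> \<le> (\<Sum>r<n. x r) / real n}
    \<le> exp (- (real n * (\<theta> - \<mu>)\<^sup>2 / 2))"
proof -
  interpret M: prob_space M by (rule M(1))
  interpret product_prob_space "\<lambda>_. M" "{..<n}" by unfold_locales
  let ?PM = "PiM {..<n} (\<lambda>_. M)"
  let ?S = "{x \<in> space ?PM. \<theta> \<le> (\<Sum>r<n. x r) / real n}"
  define D where "D = \<theta> - \<mu>"
  have D: "0 < D" using lt by (simp add: D_def)
  let ?g = "\<lambda>x. (\<Prod>r<n. exp (D * (x r - \<mu>))) * exp (- (D * (real n * D)))"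
  have [measurable]: "(\<lambda>x. x r) \<in> borel_measurable ?PM" for r
    by (rule measurable_component_PiM_borel) (use M in simp)
  have mgf: "integrable M (\<lambda>z. exp (D * (z - \<mu>)))" "(\<integral>z. exp (D * (z - \<mu>)) \<partial>M) \<le> exp (D\<^sup>2 / 2)"
    using subg by (auto simp: subgaussian_def)
  have int: "integrable ?PM ?g"
    by (intro integrable_mult_left product_integrable_prod) (auto intro: mgf)
  \<comment> \<open>Chernoff: on \<open>?S\<close> the sum of \<open>D * (x r - \<mu>)\<close> is at least \<open>n * D\<^sup>2\<close>.\<close>
  have "indicator ?S x \<le> ?g x" for x
  proof (cases "x \<in> ?S")
    case True
    then have "real n * D \<le> (\<Sum>r<n. x r - \<mu>)"
      using n by (simp add: sum_subtractf D_def field_simps)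
    then have "D * (real n * D) \<le> (\<Sum>r<n. D * (x r - \<mu>))"
      using D by (simp add: sum_distrib_left[symmetric])
    then show ?thesis using True by (simp add: exp_sum[symmetric] exp_minus field_simps)
  qed (simp add: prod_nonneg)
  moreover have "?S \<in> sets ?PM" by measurable
  ultimately have "measure ?PM ?S \<le> (\<integral>x. ?g x \<partial>?PM)"
    using integral_mono'[OF int, of "indicator ?S"] by (simp add: prod_nonneg)
  also have "\<dots> = (\<Prod>r<n. (\<integral>z. exp (D * (z - \<mu>)) \<partial>M)) * exp (- (D * (real n * D)))"
    by (subst integral_mult_left_zero) (subst product_integral_prod, auto intro: mgf)
  also have "\<dots> \<le> (\<Prod>r<n. exp (D\<^sup>2 / 2)) * exp (- (D * (real n * D)))"
    by (intro mult_right_mono prod_mono) (use mgf in auto)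
  also have "\<dots> = exp (- (real n * D\<^sup>2 / 2))"
    by (simp add: exp_of_nat_mult[symmetric] exp_add[symmetric] power2_eq_square field_simps)
  finally show ?thesis by (simp add: D_def)
qed

lemma q_prob_nonneg: "0 \<le> q_prob P \<theta> \<mu>"
  by (simp add: q_prob_def)

lemma q_prob_le_1: "prob_space (P \<mu>) \<Longrightarrow> q_prob P \<theta> \<mu> \<le> 1"
  unfolding q_prob_def by (intro prob_space.prob_le_1 prob_space_PiM)

lemma q_prob_le_prefix:
  assumes law: "prob_space (P \<mu>)" "sets (P \<mu>) = sets borel"
  shows "q_prob P \<theta> \<mu> \<le> measure (PiM {..<L} (\<lambda>_. P \<mu>))
    {x \<in> space (PiM {..<L} (\<lambda>_. P \<mu>)). \<forall>n. 0 < n \<longrightarrow> n \<le> L \<longrightarrow> \<theta> \<le> (\<Sum>r<n. x r) / real n}"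
    (is "_ \<le> measure ?PM ?R")
proof -
  interpret Q: prob_space "P \<mu>" by (rule law(1))
  interpret product_prob_space "\<lambda>_. P \<mu>" "UNIV :: nat set" by unfold_locales
  let ?U = "PiM (UNIV :: nat set) (\<lambda>_. P \<mu>)"
  have [measurable]: "(\<lambda>x. x r) \<in> borel_measurable ?PM" for r
    by (rule measurable_component_PiM_borel) (rule law(2))
  have R: "?R \<in> sets ?PM" by measurable
  have "{x \<in> space ?U. \<forall>n\<ge>1. (\<Sum>i<n. x i) / real n > \<theta>} \<subseteq> prod_emb UNIV (\<lambda>_. P \<mu>) {..<L} ?R"
  proof
    fix x assume x: "x \<in> {x \<in> space ?U. \<forall>n\<ge>1. (\<Sum>i<n. x i) / real n > \<theta>}"
    have "\<theta> \<le> (\<Sum>r<n. restrict x {..<L} r) / real n" if "0 < n" "n \<le> L" for n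
    proof -
      have "(\<Sum>r<n. restrict x {..<L} r) = (\<Sum>r<n. x r)" using that by (intro sum.cong) auto
      moreover have "\<theta> < (\<Sum>r<n. x r) / real n" using x that by auto
      ultimately show ?thesis by simp
    qed
    moreover have "restrict x {..<L} \<in> space ?PM" using x by (auto simp: space_PiM)
    ultimately show "x \<in> prod_emb UNIV (\<lambda>_. P \<mu>) {..<L} ?R"
      using x by (auto simp: prod_emb_def space_PiM)
  qed
  then have "q_prob P \<theta> \<mu> \<le> measure ?U (prod_emb UNIV (\<lambda>_. P \<mu>) {..<L} ?R)"
    unfolding q_prob_def by (intro P.finite_measure_mono) (use R in auto)
  also have "\<dots> = measure ?PM ?R"
    using emeasure_PiM_emb'[of "{..<L}" ?R] R by (simp add: measure_def)
  finally show ?thesis .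
qed

lemma (in finite_measure) measure_eq_sum_values:
  assumes "finite S" "\<And>x. x \<in> space M \<Longrightarrow> f x \<in> S"
    and "\<And>s. s \<in> S \<Longrightarrow> {x \<in> space M. Q x \<and> f x = s} \<in> sets M"
  shows "measure M {x \<in> space M. Q x} = (\<Sum>s\<in>S. measure M {x \<in> space M. Q x \<and> f x = s})"
proof -
  have "{x \<in> space M. Q x} = (\<Union>s\<in>S. {x \<in> space M. Q x \<and> f x = s})" using assms(2) by auto
  then show ?thesis
    by (simp only:) (rule finite_measure_finite_Union[OF assms(1)],
        use assms(3) in \<open>auto simp: disjoint_family_on_def\<close>)
qed

lemma (in finite_measure) integrable_real_indicator_sets[simp]:
  "A \<in> sets M \<Longrightarrow> integrable M (indicator A :: _ \<Rightarrow> real)"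
  using emeasure_finite[of A] by (simp add: less_top[symmetric])

lemma (in prob_space) expectation_sum_indicator:
  assumes "\<And>i. i \<in> I \<Longrightarrow> A i \<in> events"
  shows "integrable M (\<lambda>x. \<Sum>i\<in>I. indicator (A i) x :: real)"
    and "(\<integral>x. (\<Sum>i\<in>I. indicator (A i) x) \<partial>M) = (\<Sum>i\<in>I. prob (A i))"
  using assms by (simp_all add: Bochner_Integration.integral_sum)

lemma (in prob_space) expectation_sum_const_diff:
  fixes f :: "'i \<Rightarrow> 'a \<Rightarrow> real"
  assumes "finite I" "\<And>t. t \<in> I \<Longrightarrow> integrable M (f t)"
  shows "(\<integral>x. (\<Sum>t\<in>I. c - f t x) \<partial>M) = (\<Sum>t\<in>I. c - (\<integral>x. f t x \<partial>M))"
  using assms by (simp add: Bochner_Integration.integral_sum Bochner_Integration.integral_diff prob_space)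

lemma (in prob_space) expectation_indicator_plus_sum:
  assumes "A \<in> events" "\<And>j. j \<in> J \<Longrightarrow> integrable M (g j)"
  shows "integrable M (\<lambda>x. a * indicator A x + b + (\<Sum>j\<in>J. c j * g j x) :: real)"
    and "(\<integral>x. a * indicator A x + b + (\<Sum>j\<in>J. c j * g j x) \<partial>M)
      = a * prob A + b + (\<Sum>j\<in>J. c j * (\<integral>x. g j x \<partial>M))"
  using assms by (simp_all add: Bochner_Integration.integral_sum prob_space)

lemma (in prob_space) PiM_prod_components:
  fixes f :: "'a \<Rightarrow> real"
  assumes I: "finite I" "J \<subseteq> I" and f: "integrable M f"
  shows "integrable (PiM I (\<lambda>_. M)) (\<lambda>x. \<Prod>i\<in>J. f (x i))"
    and "(\<integral>x. (\<Prod>i\<in>J. f (x i)) \<partial>PiM I (\<lambda>_. M)) = (\<integral>y. f y \<partial>M) ^ card J"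
proof -
  have space_1: "prob (space M) = 1" by (rule prob_space)
  interpret product_prob_space "\<lambda>_. M" I by unfold_locales
  let ?f = "\<lambda>i y. if i \<in> J then f y else 1"
  have prod: "(\<Prod>i\<in>J. f (x i)) = (\<Prod>i\<in>I. ?f i (x i))" for x
    using I by (simp add: prod.inter_restrict[symmetric] Int_absorb1)
  have int: "integrable M (?f i)" for i using f by (cases "i \<in> J") simp_all
  show "integrable (PiM I (\<lambda>_. M)) (\<lambda>x. \<Prod>i\<in>J. f (x i))"
    unfolding prod using I(1) by (intro product_integrable_prod int)
  have "(\<integral>x. (\<Prod>i\<in>I. ?f i (x i)) \<partial>PiM I (\<lambda>_. M)) = (\<Prod>i\<in>I. \<integral>y. ?f i y \<partial>M)"
    using I(1) by (intro product_integral_prod int)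
  also have "\<dots> = (\<Prod>i\<in>I. if i \<in> J then \<integral>y. f y \<partial>M else 1)"
    by (intro prod.cong) (auto simp: space_1)
  also have "\<dots> = (\<Prod>i\<in>J. \<integral>y. f y \<partial>M)"
    using I by (simp add: prod.inter_restrict[symmetric] Int_absorb1)
  finally show "(\<integral>x. (\<Prod>i\<in>J. f (x i)) \<partial>PiM I (\<lambda>_. M)) = (\<integral>y. f y \<partial>M) ^ card J"
    unfolding prod by simp
qed

lemma (in prob_space) PiM_component_integral:
  fixes f :: "'a \<Rightarrow> real"
  assumes i: "i \<in> I" and f: "integrable M f"
  shows "integrable (PiM I (\<lambda>_. M)) (\<lambda>x. f (x i))"
    and "(\<integral>x. f (x i) \<partial>PiM I (\<lambda>_. M)) = (\<integral>y. f y \<partial>M)"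
proof -
  interpret product_prob_space "\<lambda>_. M" I by unfold_locales
  have comp: "(\<lambda>x. x i) \<in> PiM I (\<lambda>_. M) \<rightarrow>\<^sub>M M" using i by (rule measurable_component_singleton)
  have distr: "distr (PiM I (\<lambda>_. M)) M (\<lambda>x. x i) = M" using PiM_component[OF i] by simp
  show "integrable (PiM I (\<lambda>_. M)) (\<lambda>x. f (x i))"
    using integrable_distr_eq[OF comp borel_measurable_integrable[OF f]] f distr by simp
  show "(\<integral>x. f (x i) \<partial>PiM I (\<lambda>_. M)) = (\<integral>y. f y \<partial>M)"
    using integral_distr[OF comp borel_measurable_integrable[OF f]] distr by simp
qed

lemma (in prob_space) integral_iid_prefix:
  fixes f g :: "'a \<Rightarrow> real"
  assumes k\<^sub>1: "k\<^sub>1 \<le> k" and f: "integrable M f" and g: "integrable M g"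
  shows "integrable (PiM {1..k} (\<lambda>_. M)) (\<lambda>x. c * (\<Prod>i<k\<^sub>1. g (x (Suc i))) + d + (\<Sum>i<k\<^sub>1. f (x (Suc i))))"
    and "(\<integral>x. c * (\<Prod>i<k\<^sub>1. g (x (Suc i))) + d + (\<Sum>i<k\<^sub>1. f (x (Suc i))) \<partial>PiM {1..k} (\<lambda>_. M))
      = c * (\<integral>y. g y \<partial>M) ^ k\<^sub>1 + d + real k\<^sub>1 * (\<integral>y. f y \<partial>M)"
proof -
  interpret PiM: prob_space "PiM {1..k} (\<lambda>_. M)" by (intro prob_space_PiM prob_space_axioms)
  have prod: "(\<Prod>i<k\<^sub>1. g (x (Suc i))) = (\<Prod>i\<in>{1..k\<^sub>1}. g (x i))" for x :: "nat \<Rightarrow> 'a"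
    by (simp add: prod.atLeast1_atMost_eq)
  have J: "{1..k\<^sub>1} \<subseteq> {1..k}" using k\<^sub>1 by auto
  have comp: "Suc i \<in> {1..k}" if "i < k\<^sub>1" for i using that k\<^sub>1 by simp
  note prods = PiM_prod_components[OF finite_atLeastAtMost J g]
  note comps = PiM_component_integral[OF comp f]
  have int_prod: "integrable (PiM {1..k} (\<lambda>_. M)) (\<lambda>x. c * (\<Prod>i\<in>{1..k\<^sub>1}. g (x i)))"
    by (intro integrable_mult_right prods(1))
  have int_sum: "integrable (PiM {1..k} (\<lambda>_. M)) (\<lambda>x. \<Sum>i<k\<^sub>1. f (x (Suc i)))"
    by (intro Bochner_Integration.integrable_sum comps(1)) simp
  show "integrable (PiM {1..k} (\<lambda>_. M)) (\<lambda>x. c * (\<Prod>i<k\<^sub>1. g (x (Suc i))) + d + (\<Sum>i<k\<^sub>1. f (x (Suc i))))"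
    unfolding prod by (intro Bochner_Integration.integrable_add int_prod int_sum PiM.integrable_const)
  let ?P = "PiM {1..k} (\<lambda>_. M)"
  have split: "(\<integral>x. c * (\<Prod>i\<in>{1..k\<^sub>1}. g (x i)) + d + (\<Sum>i<k\<^sub>1. f (x (Suc i))) \<partial>?P)
      = (\<integral>x. c * (\<Prod>i\<in>{1..k\<^sub>1}. g (x i)) + d \<partial>?P) + (\<integral>x. (\<Sum>i<k\<^sub>1. f (x (Suc i))) \<partial>?P)"
    by (intro Bochner_Integration.integral_add Bochner_Integration.integrable_add int_prod int_sum
        PiM.integrable_const)
  have const: "(\<integral>x. c * (\<Prod>i\<in>{1..k\<^sub>1}. g (x i)) + d \<partial>?P) = (\<integral>x. c * (\<Prod>i\<in>{1..k\<^sub>1}. g (x i)) \<partial>?P) + d"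
    using Bochner_Integration.integral_add[OF int_prod PiM.integrable_const, of d] PiM.prob_space by simp
  have sum: "(\<integral>x. (\<Sum>i<k\<^sub>1. f (x (Suc i))) \<partial>?P) = (\<Sum>i<k\<^sub>1. \<integral>x. f (x (Suc i)) \<partial>?P)"
    by (rule Bochner_Integration.integral_sum) (rule comps(1), simp)
  show "(\<integral>x. c * (\<Prod>i<k\<^sub>1. g (x (Suc i))) + d + (\<Sum>i<k\<^sub>1. f (x (Suc i))) \<partial>?P)
      = c * (\<integral>y. g y \<partial>M) ^ k\<^sub>1 + d + real k\<^sub>1 * (\<integral>y. f y \<partial>M)"
    unfolding prod split const sum using prods(2) comps(2) by simp
qed

lemma sum_exp_neg_mult_le:
  fixes x :: real
  assumes x: "0 < x"
  shows "(\<Sum>n\<in>{1..T}. exp (- (real n * x))) \<le> 1 / x"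
proof -
  define r where "r = exp (- x)"
  have r: "0 < r" "r < 1" using x by (auto simp: r_def)
  have "(\<Sum>n\<in>{1..T}. exp (- (real n * x))) = r * (\<Sum>n<T. r ^ n)"
    using sum.atLeast1_atMost_eq[of "\<lambda>n. r ^ n" T]
    by (simp add: r_def exp_of_nat_mult[symmetric] sum_distrib_left mult.commute)
  also have "\<dots> = r * ((1 - r ^ T) / (1 - r))" using r by (simp add: sum_gp_strict)
  also have "\<dots> \<le> r / (1 - r)" using r by (simp add: divide_right_mono mult_left_le)
  also have "\<dots> = 1 / (exp x - 1)" using x by (simp add: r_def exp_minus field_simps)
  also have "\<dots> \<le> 1 / x"
  proof -
    have "x \<le> exp x - 1" using exp_ge_add_one_self[of x] by linarith
    then show ?thesis using x by (intro divide_left_mono) auto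
  qed
  finally show ?thesis .
qed

section \<open>Costs of good and bad arms\<close>

definition good_arm_prob :: "(real \<Rightarrow> real measure) \<Rightarrow> real \<Rightarrow> real \<Rightarrow> real" where
  "good_arm_prob P \<delta> \<mu> = indicator {1 - \<delta>..} \<mu> * q_prob P (1 - 2 * \<delta>) \<mu>"

definition bad_gap :: "real \<Rightarrow> real \<Rightarrow> real" where
  "bad_gap \<delta> \<mu> = (if \<mu> < 1 - 3 * \<delta> then 1 - \<mu> else 0)"

definition bad_arm_cost :: "real \<Rightarrow> nat \<Rightarrow> real \<Rightarrow> real" where
  "bad_arm_cost \<delta> T \<mu> = (if \<mu> < 1 - 3 * \<delta>
     then min (1 + 3 / (((1 - exp (-1)) / 2) * (1 - 2 * \<delta> - \<mu>))) (real T * (1 - \<mu>)) else 0)"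

lemma good_arm_prob_bounds:
  "prob_space (P \<mu>) \<Longrightarrow> 0 \<le> good_arm_prob P \<delta> \<mu> \<and> good_arm_prob P \<delta> \<mu> \<le> 1"
  using q_prob_nonneg q_prob_le_1 by (auto simp: good_arm_prob_def indicator_def)

lemma bad_gap_nonneg: "\<mu> \<le> 1 \<Longrightarrow> 0 \<le> bad_gap \<delta> \<mu>"
  by (simp add: bad_gap_def)

lemma bad_arm_cost_bounds:
  assumes "0 < \<delta>" "\<mu> \<in> {0..1}"
  shows "0 \<le> bad_arm_cost \<delta> T \<mu>" "bad_arm_cost \<delta> T \<mu> \<le> real T"
proof -
  have "0 < ((1 - exp (-1)) / 2) * (1 - 2 * \<delta> - \<mu>)" if "\<mu> < 1 - 3 * \<delta>"
    using that assms by (intro mult_pos_pos) auto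
  moreover have "real T * (1 - \<mu>) \<le> real T" using assms(2) by (simp add: mult_left_le)
  ultimately show "0 \<le> bad_arm_cost \<delta> T \<mu>" "bad_arm_cost \<delta> T \<mu> \<le> real T"
    using assms by (auto simp: bad_arm_cost_def min_def)
qed

lemma bad_gap_mult_le_bad_arm_cost:
  assumes \<delta>: "0 < \<delta>" and \<mu>_nonneg: "0 \<le> \<mu>" and V: "0 \<le> V" "V \<le> real T"
    and visits: "\<mu> < 1 - 3 * \<delta> \<Longrightarrow> V \<le> 1 + (\<Sum>n\<in>{1..T}. exp (- (real n * (1 - 2 * \<delta> - \<mu>)\<^sup>2 / 2)))"
  shows "bad_gap \<delta> \<mu> * V \<le> bad_arm_cost \<delta> T \<mu>"
proof (cases "\<mu> < 1 - 3 * \<delta>")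
  case True
  \<comment> \<open>\<open>1 - \<mu> \<le> 3 D\<close> yields even \<open>1 + 6 / D\<close>; the factor \<open>(1 - exp (-1)) / 2\<close> only weakens it.\<close>
  define D where "D = 1 - 2 * \<delta> - \<mu>"
  have D: "0 < D" "1 - \<mu> \<le> 3 * D" using True \<delta> by (auto simp: D_def)
  have "(\<Sum>n\<in>{1..T}. exp (- (real n * D\<^sup>2 / 2))) \<le> 1 / (D\<^sup>2 / 2)"
    using sum_exp_neg_mult_le[of "D\<^sup>2 / 2" T] D by (simp add: mult.assoc)
  then have "V \<le> 1 + 2 / D\<^sup>2" using visits True by (simp add: D_def)
  then have "(1 - \<mu>) * V \<le> (1 - \<mu>) * (1 + 2 / D\<^sup>2)" using True \<delta> by (intro mult_left_mono) auto
  also have "\<dots> = (1 - \<mu>) + (1 - \<mu>) * (2 / D\<^sup>2)" by (simp add: algebra_simps)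
  also have "\<dots> \<le> 1 + 3 * D * (2 / D\<^sup>2)"
  proof (rule add_mono)
    show "(1 - \<mu>) * (2 / D\<^sup>2) \<le> 3 * D * (2 / D\<^sup>2)" by (rule mult_right_mono[OF D(2)]) simp
  qed (use \<mu>_nonneg in simp)
  also have "\<dots> = 1 + 6 / D" using D by (simp add: power2_eq_square field_simps)
  also have "\<dots> \<le> 1 + 3 / (((1 - exp (-1)) / 2) * D)"
  proof -
    have "0 < 1 - exp (-1::real)" "1 - exp (-1::real) \<le> 1" by auto
    then show ?thesis using D by (simp add: field_simps)
  qed
  finally have "(1 - \<mu>) * V \<le> 1 + 3 / (((1 - exp (-1)) / 2) * D)" .
  moreover have "(1 - \<mu>) * V \<le> real T * (1 - \<mu>)"
    using V True \<delta> by (simp add: mult.commute mult_left_mono)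
  ultimately show ?thesis using True by (simp add: bad_gap_def bad_arm_cost_def D_def)
qed (simp add: bad_gap_def bad_arm_cost_def)

section \<open>Regret for fixed means\<close>

locale bandit =
  fixes P :: "real \<Rightarrow> real measure" and k T :: nat and m :: "nat \<Rightarrow> real"
  assumes prob_space_P: "\<And>\<mu>. \<mu> \<in> {0..1} \<Longrightarrow> prob_space (P \<mu>)"
    and sets_P: "\<And>\<mu>. \<mu> \<in> {0..1} \<Longrightarrow> sets (P \<mu>) = sets borel"
    and subgaussian_P: "\<And>\<mu>. \<mu> \<in> {0..1} \<Longrightarrow> subgaussian (P \<mu>) \<mu>"
    and means: "\<And>i. i \<in> {1..k} \<Longrightarrow> m i \<in> {0..1}"
    and arms_pos: "0 < k" and horizon_pos: "0 < T"
begin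

abbreviation reward_law :: "nat \<times> nat \<Rightarrow> real measure" where
  "reward_law it \<equiv> P (m (fst it))"

abbreviation \<Omega> :: "(nat \<times> nat \<Rightarrow> real) measure" where
  "\<Omega> \<equiv> PiM ({1..k} \<times> {1..T}) reward_law"

sublocale prob_space \<Omega>
  by (rule prob_space_PiM) (use prob_space_P means in auto)

lemma measurable_reward_arms:
  "S \<subseteq> {1..k} \<Longrightarrow> (\<lambda>Y. Y x) \<in> borel_measurable (PiM (S \<times> {1..T}) reward_law)"
  by (rule measurable_component_PiM_borel) (use sets_P means in auto)

lemma measurable_reward[measurable]: "(\<lambda>Y. Y x) \<in> borel_measurable \<Omega>"
  by (rule measurable_reward_arms) simp

lemma measurable_reward_arm_samples:
  "i \<in> {1..k} \<Longrightarrow> (\<lambda>x. x r) \<in> borel_measurable (PiM L (\<lambda>_. P (m i)))"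
  by (rule measurable_component_PiM_borel) (rule sets_P[OF means])

lemma measurable_arm_segment:
  assumes "i \<in> {1..k}" "0 < s" "s + L \<le> Suc T"
  shows "(\<lambda>Y. \<lambda>r\<in>{..<L}. Y (i, s + r)) \<in> \<Omega> \<rightarrow>\<^sub>M PiM {..<L} (\<lambda>_. P (m i))"
proof -
  have "(\<lambda>Y. \<lambda>r\<in>{..<L}. Y (i, s + r)) \<in> \<Omega> \<rightarrow>\<^sub>M PiM {..<L} (\<lambda>r. reward_law (i, s + r))"
    by (intro measurable_restrict measurable_component_singleton) (use assms in auto)
  then show ?thesis by simp
qed

lemma prob_arm_segment:
  assumes i: "i \<in> {1..k}" and s: "0 < s" "s + L \<le> Suc T"
    and R: "R \<in> sets (PiM {..<L} (\<lambda>_. P (m i)))"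
  shows "prob {Y \<in> space \<Omega>. (\<lambda>r\<in>{..<L}. Y (i, s + r)) \<in> R} = measure (PiM {..<L} (\<lambda>_. P (m i))) R"
proof -
  let ?seg = "\<lambda>Y. \<lambda>r\<in>{..<L}. Y (i, s + r)"
  have "distr \<Omega> (PiM {..<L} (\<lambda>r. reward_law (i, s + r))) ?seg = PiM {..<L} (\<lambda>r. reward_law (i, s + r))"
    by (rule distr_PiM_reindex) (use prob_space_P means i s in \<open>auto simp: inj_on_def\<close>)
  then have "measure (PiM {..<L} (\<lambda>_. P (m i))) R = measure \<Omega> (?seg -` R \<inter> space \<Omega>)"
    using measure_distr[OF measurable_arm_segment[OF i s] R] by simp
  then show ?thesis by (simp add: vimage_def Int_def conj_commute)
qed

lemma prob_sample_mean_ge: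
  assumes i: "i \<in> {1..k}" and lt: "m i < \<theta>" and n: "0 < n" and s: "0 < s" "s + n \<le> Suc T"
  shows "prob {Y \<in> space \<Omega>. \<theta> \<le> sample_mean Y i s n} \<le> exp (- (real n * (\<theta> - m i)\<^sup>2 / 2))"
proof -
  let ?PM = "PiM {..<n} (\<lambda>_. P (m i))"
  let ?R = "{x \<in> space ?PM. \<theta> \<le> (\<Sum>r<n. x r) / real n}"
  have [measurable]: "(\<lambda>x. x r) \<in> borel_measurable ?PM" for r
    by (rule measurable_reward_arm_samples[OF i])
  have R: "?R \<in> sets ?PM" by measurable
  have eq: "{Y \<in> space \<Omega>. \<theta> \<le> sample_mean Y i s n} = {Y \<in> space \<Omega>. (\<lambda>r\<in>{..<n}. Y (i, s + r)) \<in> ?R}"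
  proof (intro Collect_cong conj_cong refl)
    fix Y assume "Y \<in> space \<Omega>"
    then show "\<theta> \<le> sample_mean Y i s n \<longleftrightarrow> (\<lambda>r\<in>{..<n}. Y (i, s + r)) \<in> ?R"
      using measurable_space[OF measurable_arm_segment[OF i s]] sample_mean_restrict[of n n] by simp
  qed
  have "prob {Y \<in> space \<Omega>. \<theta> \<le> sample_mean Y i s n} = measure ?PM ?R"
    unfolding eq by (rule prob_arm_segment[OF i s R])
  also have "\<dots> \<le> exp (- (real n * (\<theta> - m i)\<^sup>2 / 2))"
    using subgaussian_sample_mean_tail[OF prob_space_P sets_P subgaussian_P lt n] means[OF i] by simp
  finally show ?thesis .
qed

lemma q_prob_le_prob_stays_above:
  assumes i: "i \<in> {1..k}" and s: "0 < s"
  shows "q_prob P \<theta> (m i) \<le> prob {Y \<in> space \<Omega>. stays_above T \<theta> Y i s}"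
proof (cases "T \<le> s")
  case True
  then have "stays_above T \<theta> Y i s" for Y by (simp add: stays_above_def)
  then have "{Y \<in> space \<Omega>. stays_above T \<theta> Y i s} = space \<Omega>" by simp
  then show ?thesis using q_prob_le_1[of P "m i", OF prob_space_P[OF means[OF i]]] prob_space by simp
next
  case False
  define L where "L = T - s"
  let ?PM = "PiM {..<L} (\<lambda>_. P (m i))"
  let ?R = "{x \<in> space ?PM. \<forall>n. 0 < n \<longrightarrow> n \<le> L \<longrightarrow> \<theta> \<le> (\<Sum>r<n. x r) / real n}"
  have [measurable]: "(\<lambda>x. x r) \<in> borel_measurable ?PM" for r
    by (rule measurable_reward_arm_samples[OF i])
  have R: "?R \<in> sets ?PM" by measurable
  have L: "s + L \<le> Suc T" using False by (simp add: L_def)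
  have eq: "{Y \<in> space \<Omega>. stays_above T \<theta> Y i s} = {Y \<in> space \<Omega>. (\<lambda>r\<in>{..<L}. Y (i, s + r)) \<in> ?R}"
  proof (intro Collect_cong conj_cong refl)
    fix Y assume Y: "Y \<in> space \<Omega>"
    have seg: "(\<lambda>r\<in>{..<L}. Y (i, s + r)) \<in> space ?PM"
      using measurable_space[OF measurable_arm_segment[OF i s L] Y] .
    have "stays_above T \<theta> Y i s \<longleftrightarrow> (\<forall>n. 0 < n \<longrightarrow> n \<le> L \<longrightarrow> \<theta> \<le> sample_mean Y i s n)"
      using False by (simp add: stays_above_def L_def le_diff_conv2 add.commute)
    also have "\<dots> \<longleftrightarrow> (\<lambda>r\<in>{..<L}. Y (i, s + r)) \<in> ?R"
      using seg sample_mean_restrict[of _ L] by simp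
    finally show "stays_above T \<theta> Y i s \<longleftrightarrow> (\<lambda>r\<in>{..<L}. Y (i, s + r)) \<in> ?R" .
  qed
  have "prob {Y \<in> space \<Omega>. stays_above T \<theta> Y i s} = measure ?PM ?R"
    unfolding eq by (rule prob_arm_segment[OF i s L R])
  moreover have "q_prob P \<theta> (m i) \<le> measure ?PM ?R"
    using q_prob_le_prefix[OF prob_space_P sets_P] means[OF i] by simp
  ultimately show ?thesis by simp
qed

lemma depends_only_on_arms_restrict:
  assumes Y: "Y \<in> space \<Omega>" and F: "depends_only_on_arms S F"
  shows "F (restrict Y (S \<times> {1..T})) = F Y"
proof (rule depends_only_on_armsD[OF F])
  fix i u assume "i \<in> S"
  show "restrict Y (S \<times> {1..T}) (i, u) = Y (i, u)"
  proof (cases "u \<in> {1..T}")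
    case False
    then have "Y (i, u) = undefined" using Y by (auto simp: space_PiM PiE_def extensional_def)
    then show ?thesis using False by simp
  qed (use \<open>i \<in> S\<close> in simp)
qed

lemma restrict_reward_pred_iff:
  assumes Y: "Y \<in> space \<Omega>" and S: "S \<subseteq> {1..k}" and F: "depends_only_on_arms S F"
  shows "restrict Y (S \<times> {1..T}) \<in> {Z \<in> space (PiM (S \<times> {1..T}) reward_law). F Z} \<longleftrightarrow> F Y"
proof -
  have "restrict Y (S \<times> {1..T}) \<in> space (PiM (S \<times> {1..T}) reward_law)"
    using Y S by (auto simp: space_PiM)
  then show ?thesis using depends_only_on_arms_restrict[OF Y F] by simp
qed

lemma measurable_pred_arms:
  assumes S: "S \<subseteq> {1..k}" and F: "depends_only_on_arms S F"
    and meas: "Measurable.pred (PiM (S \<times> {1..T}) reward_law) F"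
  shows "Measurable.pred \<Omega> F"
proof -
  have "(\<lambda>Y. restrict Y (S \<times> {1..T})) \<in> \<Omega> \<rightarrow>\<^sub>M PiM (S \<times> {1..T}) reward_law"
    by (rule measurable_restrict_subset) (use S in auto)
  from measurable_compose[OF this meas]
  have "Measurable.pred \<Omega> (\<lambda>Y. F (restrict Y (S \<times> {1..T})))" .
  moreover note depends_only_on_arms_restrict[OF _ F]
  ultimately show ?thesis using measurable_cong[of \<Omega> "\<lambda>Y. F (restrict Y (S \<times> {1..T}))" F] by simp
qed

lemma prob_indep_arms:
  assumes S: "Sa \<subseteq> {1..k}" "Sb \<subseteq> {1..k}" "Sa \<inter> Sb = {}"
    and dep: "depends_only_on_arms Sa Fa" "depends_only_on_arms Sb Fb"
    and meas: "Measurable.pred (PiM (Sa \<times> {1..T}) reward_law) Fa"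
      "Measurable.pred (PiM (Sb \<times> {1..T}) reward_law) Fb"
  shows "prob {Y \<in> space \<Omega>. Fa Y \<and> Fb Y} = prob {Y \<in> space \<Omega>. Fa Y} * prob {Y \<in> space \<Omega>. Fb Y}"
proof -
  let ?A = "Sa \<times> {1..T}" and ?B = "Sb \<times> {1..T}"
  let ?Xa = "{Z \<in> space (PiM ?A reward_law). Fa Z}" and ?Xb = "{Z \<in> space (PiM ?B reward_law). Fb Z}"
  note a = restrict_reward_pred_iff[OF _ S(1) dep(1)] and b = restrict_reward_pred_iff[OF _ S(2) dep(2)]
  have "prob {Y \<in> space \<Omega>. restrict Y ?A \<in> ?Xa \<and> restrict Y ?B \<in> ?Xb}
      = prob {Y \<in> space \<Omega>. restrict Y ?A \<in> ?Xa} * prob {Y \<in> space \<Omega>. restrict Y ?B \<in> ?Xb}"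
    using S meas arms_pos horizon_pos prob_space_P means
    by (intro measure_PiM_restrict_indep) (auto simp: pred_def)
  moreover have "{Y \<in> space \<Omega>. restrict Y ?A \<in> ?Xa \<and> restrict Y ?B \<in> ?Xb} = {Y \<in> space \<Omega>. Fa Y \<and> Fb Y}"
    "{Y \<in> space \<Omega>. restrict Y ?A \<in> ?Xa} = {Y \<in> space \<Omega>. Fa Y}"
    "{Y \<in> space \<Omega>. restrict Y ?B \<in> ?Xb} = {Y \<in> space \<Omega>. Fb Y}"
    using a b by (auto intro!: Collect_cong)
  ultimately show ?thesis by simp
qed

text \<open>The start of arm \<open>j + 1\<close> is determined by arms \<open>1..j\<close>, so conditioning on it does
  not affect events about arm \<open>j + 1\<close> alone.\<close>

lemma prob_at_arm_start_le:
  assumes j: "Suc j \<le> k"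
    and dep_a: "depends_only_on_arms {1..j} Fa"
    and meas_a: "Measurable.pred (PiM ({1..j} \<times> {1..T}) reward_law) Fa"
    and dep_b: "\<And>s. depends_only_on_arms {Suc j} (Fb s)"
    and meas_b: "\<And>s. Measurable.pred (PiM ({Suc j} \<times> {1..T}) reward_law) (Fb s)"
    and bound: "\<And>s. 0 < s \<Longrightarrow> prob {Y \<in> space \<Omega>. Fb s Y} \<le> c"
  shows "prob {Y \<in> space \<Omega>. Fa Y \<and> Fb (arm_start T \<theta> Y j) Y} \<le> c * prob {Y \<in> space \<Omega>. Fa Y}"
proof -
  let ?S = "{1..1 + j * Suc T}" and ?start = "\<lambda>Y. arm_start T \<theta> Y j"
  let ?Fa = "\<lambda>s Y. Fa Y \<and> ?start Y = s"
  have Sa: "{1..j} \<subseteq> {1..k}" and Sb: "{Suc j} \<subseteq> {1..k}" using j by auto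
  have start: "?start Y \<in> ?S" for Y using arm_start_pos[of T \<theta> Y j] arm_start_le[of T \<theta> Y j] by simp
  have dep_a': "depends_only_on_arms {1..j} (?Fa s)" for s
    using depends_only_on_arms_combine[OF dep_a depends_only_on_arms_arm_start] .
  have meas_a': "Measurable.pred (PiM ({1..j} \<times> {1..T}) reward_law) (?Fa s)" for s
    using meas_a measurable_arm_start[OF measurable_reward_arms[OF Sa]] by measurable
  have [measurable]: "Measurable.pred \<Omega> (?Fa s)" "Measurable.pred \<Omega> (Fb s)" for s
    by (rule measurable_pred_arms[OF Sa dep_a' meas_a'], rule measurable_pred_arms[OF Sb dep_b meas_b])
  have slice: "{Y \<in> space \<Omega>. (Fa Y \<and> Fb (?start Y) Y) \<and> ?start Y = s} = {Y \<in> space \<Omega>. ?Fa s Y \<and> Fb s Y}"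
    for s by auto
  have "prob {Y \<in> space \<Omega>. Fa Y \<and> Fb (?start Y) Y} = (\<Sum>s\<in>?S. prob {Y \<in> space \<Omega>. ?Fa s Y \<and> Fb s Y})"
    unfolding slice[symmetric]
    by (rule measure_eq_sum_values) (simp, use start in simp, simp only: slice, measurable)
  also have "\<dots> = (\<Sum>s\<in>?S. prob {Y \<in> space \<Omega>. ?Fa s Y} * prob {Y \<in> space \<Omega>. Fb s Y})"
    by (intro sum.cong refl prob_indep_arms[OF Sa Sb _ dep_a' dep_b meas_a' meas_b]) auto
  also have "\<dots> \<le> (\<Sum>s\<in>?S. prob {Y \<in> space \<Omega>. ?Fa s Y} * c)"
    by (intro sum_mono mult_left_mono bound) auto
  also have "\<dots> = c * prob {Y \<in> space \<Omega>. Fa Y}"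
  proof -
    have split: "prob {Y \<in> space \<Omega>. Fa Y} = (\<Sum>s\<in>?S. prob {Y \<in> space \<Omega>. ?Fa s Y})"
      by (rule measure_eq_sum_values) (simp, use start in simp, measurable)
    show ?thesis unfolding split sum_distrib_left by (intro sum.cong refl) (simp only: mult.commute)
  qed
  finally show ?thesis .
qed

definition good_arm :: "real \<Rightarrow> real \<Rightarrow> (nat \<times> nat \<Rightarrow> real) \<Rightarrow> nat \<Rightarrow> bool" where
  "good_arm a \<theta> Y j \<longleftrightarrow> a \<le> m (Suc j) \<and> stays_above T \<theta> Y (Suc j) (arm_start T \<theta> Y j)"

lemma measurable_no_good_arm[measurable]:
  assumes [measurable]: "\<And>x. (\<lambda>Y. Y x) \<in> borel_measurable N"
  shows "Measurable.pred N (\<lambda>Y. \<forall>i<j. \<not> good_arm a \<theta> Y i)"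
  unfolding good_arm_def by measurable

lemma depends_only_on_arms_no_good_arm:
  "depends_only_on_arms {1..j} (\<lambda>Y. \<forall>i<j. \<not> good_arm a \<theta> Y i)"
  unfolding depends_only_on_arms_def
proof (intro allI impI)
  fix Y Y' :: "nat \<times> nat \<Rightarrow> real"
  assume agree: "\<forall>i\<in>{1..j}. \<forall>u. Y (i, u) = Y' (i, u)"
  have "good_arm a \<theta> Y i = good_arm a \<theta> Y' i" if "i < j" for i
  proof -
    have "arm_start T \<theta> Y i = arm_start T \<theta> Y' i"
      by (rule depends_only_on_armsD[OF depends_only_on_arms_arm_start]) (use agree that in auto)
    moreover have "stays_above T \<theta> Y (Suc i) s = stays_above T \<theta> Y' (Suc i) s" for s
      by (rule depends_only_on_armsD[OF depends_only_on_arms_stays_above]) (use agree that in auto)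
    ultimately show ?thesis by (simp add: good_arm_def)
  qed
  then show "(\<forall>i<j. \<not> good_arm a \<theta> Y i) = (\<forall>i<j. \<not> good_arm a \<theta> Y' i)" by auto
qed

lemma prob_not_stays_above_le:
  assumes i: "i \<in> {1..k}" and s: "0 < s"
  shows "prob {Y \<in> space \<Omega>. \<not> stays_above T \<theta> Y i s} \<le> 1 - q_prob P \<theta> (m i)"
proof -
  have ev: "{Y \<in> space \<Omega>. stays_above T \<theta> Y i s} \<in> events"
    using measurable_stays_above[OF measurable_reward] unfolding pred_def .
  have "{Y \<in> space \<Omega>. \<not> stays_above T \<theta> Y i s} = space \<Omega> - {Y \<in> space \<Omega>. stays_above T \<theta> Y i s}"
    by blast
  then have "prob {Y \<in> space \<Omega>. \<not> stays_above T \<theta> Y i s} = 1 - prob {Y \<in> space \<Omega>. stays_above T \<theta> Y i s}"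
    by (simp only: prob_compl[OF ev])
  then show ?thesis using q_prob_le_prob_stays_above[OF i s, where \<theta> = \<theta>] by linarith
qed

lemma prob_no_good_arm_Suc_le:
  assumes j: "Suc j \<le> k"
  shows "prob {Y \<in> space \<Omega>. (\<forall>i<j. \<not> good_arm a \<theta> Y i) \<and> \<not> good_arm a \<theta> Y j}
    \<le> (1 - indicator {a..} (m (Suc j)) * q_prob P \<theta> (m (Suc j))) * prob {Y \<in> space \<Omega>. \<forall>i<j. \<not> good_arm a \<theta> Y i}"
proof (cases "a \<le> m (Suc j)")
  case False
  then have "good_arm a \<theta> Y j \<longleftrightarrow> False" for Y by (simp add: good_arm_def)
  moreover have "indicator {a..} (m (Suc j)) = (0::real)" using False by simp
  ultimately show ?thesis by (simp only: simp_thms mult_zero_left diff_zero mult.left_neutral order_refl)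
next
  case True
  have coords_a: "(\<lambda>Y. Y x) \<in> borel_measurable (PiM ({1..j} \<times> {1..T}) reward_law)" for x
    by (rule measurable_reward_arms) (use j in auto)
  have coords_b: "(\<lambda>Y. Y x) \<in> borel_measurable (PiM ({Suc j} \<times> {1..T}) reward_law)" for x
    by (rule measurable_reward_arms) (use j in auto)
  have "prob {Y \<in> space \<Omega>. (\<forall>i<j. \<not> good_arm a \<theta> Y i) \<and> \<not> stays_above T \<theta> Y (Suc j) (arm_start T \<theta> Y j)}
      \<le> (1 - q_prob P \<theta> (m (Suc j))) * prob {Y \<in> space \<Omega>. \<forall>i<j. \<not> good_arm a \<theta> Y i}"
  proof (rule prob_at_arm_start_le[OF j depends_only_on_arms_no_good_arm measurable_no_good_arm[OF coords_a]])
    show "depends_only_on_arms {Suc j} (\<lambda>Y. \<not> stays_above T \<theta> Y (Suc j) s)" for s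
      by (rule depends_only_on_arms_comp[OF depends_only_on_arms_stays_above])
    show "Measurable.pred (PiM ({Suc j} \<times> {1..T}) reward_law) (\<lambda>Y. \<not> stays_above T \<theta> Y (Suc j) s)" for s
      by (rule pred_intros_logic(2)[OF measurable_stays_above[OF coords_b]])
    show "prob {Y \<in> space \<Omega>. \<not> stays_above T \<theta> Y (Suc j) s} \<le> 1 - q_prob P \<theta> (m (Suc j))"
      if "0 < s" for s
      using j that by (intro prob_not_stays_above_le) auto
  qed
  moreover have "good_arm a \<theta> Y j \<longleftrightarrow> stays_above T \<theta> Y (Suc j) (arm_start T \<theta> Y j)" for Y
    using True by (simp add: good_arm_def)
  moreover have "indicator {a..} (m (Suc j)) = (1::real)" using True by simp
  ultimately show ?thesis by (simp only: mult.left_neutral)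
qed

lemma prob_no_good_arm_le:
  "j \<le> k \<Longrightarrow> prob {Y \<in> space \<Omega>. \<forall>i<j. \<not> good_arm a \<theta> Y i}
    \<le> (\<Prod>i<j. 1 - indicator {a..} (m (Suc i)) * q_prob P \<theta> (m (Suc i)))"
proof (induction j)
  case 0
  then show ?case using prob_space by simp
next
  case (Suc j)
  let ?q = "indicator {a..} (m (Suc j)) * q_prob P \<theta> (m (Suc j))"
  have "0 \<le> q_prob P \<theta> (m (Suc j))" "q_prob P \<theta> (m (Suc j)) \<le> 1"
    using q_prob_nonneg q_prob_le_1 prob_space_P means Suc.prems by auto
  then have q: "?q \<le> 1" by (simp add: indicator_def)
  have "{Y \<in> space \<Omega>. \<forall>i<Suc j. \<not> good_arm a \<theta> Y i}
      = {Y \<in> space \<Omega>. (\<forall>i<j. \<not> good_arm a \<theta> Y i) \<and> \<not> good_arm a \<theta> Y j}"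
    by (intro Collect_cong conj_cong refl) (auto simp: less_Suc_eq)
  with prob_no_good_arm_Suc_le[OF Suc.prems]
  have "prob {Y \<in> space \<Omega>. \<forall>i<Suc j. \<not> good_arm a \<theta> Y i}
      \<le> (1 - ?q) * prob {Y \<in> space \<Omega>. \<forall>i<j. \<not> good_arm a \<theta> Y i}"
    by (simp only:)
  also have "\<dots> \<le> (1 - ?q) * (\<Prod>i<j. 1 - indicator {a..} (m (Suc i)) * q_prob P \<theta> (m (Suc i)))"
    using Suc q by (intro mult_left_mono) auto
  also have "\<dots> = (\<Prod>i<Suc j. 1 - indicator {a..} (m (Suc i)) * q_prob P \<theta> (m (Suc i)))"
    by (simp only: prod.lessThan_Suc mult.commute)
  finally show ?case .
qed

lemma prob_high_mean_after_arm_start: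
  assumes j: "Suc j \<le> k" and lt: "m (Suc j) < \<theta>" and n: "0 < n"
  shows "prob {Y \<in> space \<Omega>. arm_start T \<theta> Y j + n \<le> T
      \<and> \<theta> \<le> sample_mean Y (Suc j) (arm_start T \<theta> Y j) n}
    \<le> exp (- (real n * (\<theta> - m (Suc j))\<^sup>2 / 2))"
proof -
  have arm: "Suc j \<in> {1..k}" using j by simp
  have [measurable]: "(\<lambda>Y. Y x) \<in> borel_measurable (PiM ({Suc j} \<times> {1..T}) reward_law)" for x
    by (rule measurable_reward_arms) (use arm in auto)
  have "prob {Y \<in> space \<Omega>. True \<and> (\<lambda>s Y. s + n \<le> T \<and> \<theta> \<le> sample_mean Y (Suc j) s n) (arm_start T \<theta> Y j) Y}
      \<le> exp (- (real n * (\<theta> - m (Suc j))\<^sup>2 / 2)) * prob {Y \<in> space \<Omega>. True}"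
  proof (rule prob_at_arm_start_le[OF j])
    show "depends_only_on_arms {Suc j} (\<lambda>Y. s + n \<le> T \<and> \<theta> \<le> sample_mean Y (Suc j) s n)" for s
      by (rule depends_only_on_arms_comp[OF depends_only_on_arms_sample_mean])
    show "Measurable.pred (PiM ({Suc j} \<times> {1..T}) reward_law) (\<lambda>Y. s + n \<le> T \<and> \<theta> \<le> sample_mean Y (Suc j) s n)" for s
      by measurable
    show "prob {Y \<in> space \<Omega>. s + n \<le> T \<and> \<theta> \<le> sample_mean Y (Suc j) s n}
        \<le> exp (- (real n * (\<theta> - m (Suc j))\<^sup>2 / 2))" if "0 < s" for s
      using prob_sample_mean_ge[OF arm lt n that] by (cases "s + n \<le> T") simp_all
  qed (simp_all add: depends_only_on_arms_def)
  then show ?thesis using prob_space by simp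
qed

lemma integrable_visits: "integrable \<Omega> (\<lambda>Y. real (visits T \<theta> Y j))"
proof (rule integrable_const_bound[where B = T])
  show "(\<lambda>Y. real (visits T \<theta> Y j)) \<in> borel_measurable \<Omega>"
    by (rule measurable_compose_countable[OF _ measurable_visits[OF measurable_reward]]) simp
qed (simp add: visits_le)

lemma expected_visits_le:
  assumes j: "Suc j \<le> k" and lt: "m (Suc j) < \<theta>"
  shows "(\<integral>Y. real (visits T \<theta> Y j) \<partial>\<Omega>) \<le> 1 + (\<Sum>n\<in>{1..T}. exp (- (real n * (\<theta> - m (Suc j))\<^sup>2 / 2)))"
proof -
  let ?E = "\<lambda>n. {Y \<in> space \<Omega>. arm_start T \<theta> Y j + n \<le> T
      \<and> \<theta> \<le> sample_mean Y (Suc j) (arm_start T \<theta> Y j) n}"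
  have E: "?E n \<in> events" for n
  proof -
    have "Measurable.pred \<Omega> (\<lambda>Y. (\<lambda>s Y. s + n \<le> T \<and> \<theta> \<le> sample_mean Y (Suc j) s n) (arm_start T \<theta> Y j) Y)"
      by (rule measurable_compose_countable[OF _ measurable_arm_start]) measurable
    then show ?thesis by (simp add: pred_def)
  qed
  have visits: "real (visits T \<theta> Y j) \<le> 1 + (\<Sum>n\<in>{1..T}. indicator (?E n) Y)" if "Y \<in> space \<Omega>" for Y
  proof -
    have "real (card {n \<in> {1..T}. arm_start T \<theta> Y j + n \<le> T \<and> \<theta> \<le> sample_mean Y (Suc j) (arm_start T \<theta> Y j) n})
        = (\<Sum>n\<in>{1..T}. indicator (?E n) Y)"
      using that by (simp add: indicator_def sum.If_cases Int_def)
    then show ?thesis using visits_le_card_high_means[of T \<theta> Y j] by linarith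
  qed
  have "(\<integral>Y. real (visits T \<theta> Y j) \<partial>\<Omega>) \<le> (\<integral>Y. 1 + (\<Sum>n\<in>{1..T}. indicator (?E n) Y) \<partial>\<Omega>)"
  proof (rule integral_mono[OF integrable_visits])
    show "integrable \<Omega> (\<lambda>Y. 1 + (\<Sum>n\<in>{1..T}. indicator (?E n) Y) :: real)"
      by (intro Bochner_Integration.integrable_add integrable_const expectation_sum_indicator(1) E)
  qed (rule visits)
  also have "\<dots> = (\<integral>Y. 1 \<partial>\<Omega>) + (\<integral>Y. (\<Sum>n\<in>{1..T}. indicator (?E n) Y) \<partial>\<Omega>)"
    by (intro Bochner_Integration.integral_add integrable_const expectation_sum_indicator(1) E)
  also have "\<dots> = 1 + (\<Sum>n\<in>{1..T}. prob (?E n))"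
    unfolding expectation_sum_indicator(2)[OF E] using prob_space by simp
  also have "\<dots> \<le> 1 + (\<Sum>n\<in>{1..T}. exp (- (real n * (\<theta> - m (Suc j))\<^sup>2 / 2)))"
    using prob_high_mean_after_arm_start[OF j lt] by (intro add_left_mono sum_mono) auto
  finally show ?thesis .
qed

lemma max_mean_le_1: "Max (m ` {1..k}) \<le> 1"
  using arms_pos means by (subst Max_le_iff) auto

lemma sg_arm_before_good_arm:
  assumes good: "good_arm a (1 - \<upsilon>) Y J" and J: "Suc J \<le> k" and t: "t \<in> {1..T}"
  obtains j where "j \<le> J" "sg_arm \<upsilon> k Y t = Suc j"
    "arm_start T (1 - \<upsilon>) Y j \<le> t" "t < arm_start T (1 - \<upsilon>) Y (Suc j)"
proof -
  let ?start = "arm_start T (1 - \<upsilon>) Y"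
  have "T < ?start (Suc J)" using good stays_above_imp_horizon_lt by (simp add: good_arm_def)
  then have t_J: "t < ?start (Suc J)" using t by simp
  have "0 < t" using t by simp
  then obtain j where j: "scheduled_arm T (1 - \<upsilon>) Y t = Suc j" "?start j \<le> t" "t < ?start (Suc j)"
    by (rule scheduled_arm_block)
  have "?start (Suc J) \<le> ?start k"
    using J strict_mono_less_eq[OF strict_mono_arm_start, of T "1 - \<upsilon>" Y "Suc J" k]
    by (simp del: arm_start.simps)
  then have "t < ?start k" using t_J by simp
  then have "sg_arm \<upsilon> k Y t = Suc j" using sg_arm_eq_scheduled_arm[of t T \<upsilon> Y k] j(1) t by simp
  moreover have "j \<le> J" using scheduled_arm_le[OF t_J] j(1) by simp
  ultimately show ?thesis using that j(2,3) by blast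
qed

lemma instant_regret_le:
  assumes \<delta>: "0 < \<delta>" and t: "t \<in> {1..T}" and k\<^sub>1: "k\<^sub>1 \<le> k"
  shows "Max (m ` {1..k}) - m (sg_arm (2 * \<delta>) k Y t)
    \<le> of_bool (\<forall>i<k\<^sub>1. \<not> good_arm (1 - \<delta>) (1 - 2 * \<delta>) Y i) + 3 * \<delta>
      + (\<Sum>j<k\<^sub>1. bad_gap \<delta> (m (Suc j))
          * of_bool (arm_start T (1 - 2 * \<delta>) Y j \<le> t \<and> t < arm_start T (1 - 2 * \<delta>) Y (Suc j)))"
    (is "_ \<le> of_bool ?fail + 3 * \<delta> + ?blocks")
proof -
  let ?start = "arm_start T (1 - 2 * \<delta>) Y"
  have blocks_nonneg: "0 \<le> ?blocks"
    using k\<^sub>1 means by (intro sum_nonneg mult_nonneg_nonneg bad_gap_nonneg) auto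
  show ?thesis
  proof (cases ?fail)
    case True
    have "sg_arm (2 * \<delta>) k Y t \<in> {1..k}" using sg_arm_in_arms arms_pos t by auto
    then have "0 \<le> m (sg_arm (2 * \<delta>) k Y t)" using means by auto
    then show ?thesis using True max_mean_le_1 \<delta> blocks_nonneg by simp
  next
    case False
    then obtain J where J: "J < k\<^sub>1" "good_arm (1 - \<delta>) (1 - 2 * \<delta>) Y J" by blast
    obtain j where j: "j \<le> J" "sg_arm (2 * \<delta>) k Y t = Suc j" "?start j \<le> t" "t < ?start (Suc j)"
      using sg_arm_before_good_arm[OF J(2)] J(1) k\<^sub>1 t by (metis le_trans less_eq_Suc_le)
    show ?thesis
    proof (cases "m (Suc j) < 1 - 3 * \<delta>")
      case True
      then have "j \<noteq> J" using J(2) \<delta> by (auto simp: good_arm_def)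
      then have "j \<in> {..<k\<^sub>1}" using j(1) J(1) by simp
      have "bad_gap \<delta> (m (Suc j)) = bad_gap \<delta> (m (Suc j)) * of_bool (?start j \<le> t \<and> t < ?start (Suc j))"
        using j by simp
      also have "\<dots> \<le> ?blocks"
        by (rule member_le_sum) (use \<open>j \<in> {..<k\<^sub>1}\<close> k\<^sub>1 means in \<open>auto intro!: bad_gap_nonneg\<close>)
      finally show ?thesis unfolding j(2) using True max_mean_le_1 \<delta> by (simp add: bad_gap_def)
    next
      case False
      then show ?thesis unfolding j(2) using max_mean_le_1 \<delta> blocks_nonneg by simp
    qed
  qed
qed

lemma cumulative_regret_le:
  assumes \<delta>: "0 < \<delta>" and k\<^sub>1: "k\<^sub>1 \<le> k"
  shows "(\<Sum>t\<in>{1..T}. Max (m ` {1..k}) - m (sg_arm (2 * \<delta>) k Y t))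
    \<le> real T * of_bool (\<forall>i<k\<^sub>1. \<not> good_arm (1 - \<delta>) (1 - 2 * \<delta>) Y i) + 3 * real T * \<delta>
      + (\<Sum>j<k\<^sub>1. bad_gap \<delta> (m (Suc j)) * real (visits T (1 - 2 * \<delta>) Y j))"
proof -
  let ?fail = "of_bool (\<forall>i<k\<^sub>1. \<not> good_arm (1 - \<delta>) (1 - 2 * \<delta>) Y i) :: real"
  let ?in = "\<lambda>j t. of_bool (arm_start T (1 - 2 * \<delta>) Y j \<le> t \<and> t < arm_start T (1 - 2 * \<delta>) Y (Suc j)) :: real"
  have "(\<Sum>t\<in>{1..T}. Max (m ` {1..k}) - m (sg_arm (2 * \<delta>) k Y t))
      \<le> (\<Sum>t\<in>{1..T}. ?fail + 3 * \<delta> + (\<Sum>j<k\<^sub>1. bad_gap \<delta> (m (Suc j)) * ?in j t))"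
    by (intro sum_mono instant_regret_le[OF \<delta> _ k\<^sub>1])
  also have "\<dots> = (\<Sum>t\<in>{1..T}. ?fail + 3 * \<delta>) + (\<Sum>j<k\<^sub>1. bad_gap \<delta> (m (Suc j)) * (\<Sum>t\<in>{1..T}. ?in j t))"
    by (simp only: sum.distrib sum.swap[of _ "{1..T}"] sum_distrib_left)
  also have "(\<Sum>t\<in>{1..T}. ?fail + 3 * \<delta>) = real T * ?fail + 3 * real T * \<delta>"
    by (simp add: algebra_simps)
  finally show ?thesis by (simp only: sum_in_block_eq_visits)
qed

lemma integrable_mean_sg_arm: "0 < t \<Longrightarrow> integrable \<Omega> (\<lambda>Y. m (sg_arm \<upsilon> k Y t))"
proof (rule integrable_const_bound[where B = 1])
  assume "0 < t"
  then show "AE Y in \<Omega>. norm (m (sg_arm \<upsilon> k Y t)) \<le> 1"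
    using sg_arm_in_arms[OF arms_pos] means by (intro AE_I2) (force simp: abs_le_iff)
  show "(\<lambda>Y. m (sg_arm \<upsilon> k Y t)) \<in> borel_measurable \<Omega>"
    by (rule measurable_compose_countable[OF _ measurable_sg_arm[OF measurable_reward]]) simp
qed

lemma sg_regret_eq_expectation:
  "sg_regret P \<upsilon> k T m = (\<integral>Y. (\<Sum>t\<in>{1..T}. Max (m ` {1..k}) - m (sg_arm \<upsilon> k Y t)) \<partial>\<Omega>)"
proof -
  have "(\<integral>Y. (\<Sum>t\<in>{1..T}. Max (m ` {1..k}) - m (sg_arm \<upsilon> k Y t)) \<partial>\<Omega>)
      = (\<Sum>t\<in>{1..T}. Max (m ` {1..k}) - (\<integral>Y. m (sg_arm \<upsilon> k Y t) \<partial>\<Omega>))"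
  proof (rule expectation_sum_const_diff)
    show "integrable \<Omega> (\<lambda>Y. m (sg_arm \<upsilon> k Y t))" if "t \<in> {1..T}" for t
      using that by (intro integrable_mean_sg_arm) simp
  qed simp
  then show ?thesis unfolding sg_regret_def reward_table_def sum_subtractf by simp
qed

lemma bad_gap_mult_expected_visits_le:
  assumes \<delta>: "0 < \<delta>" and j: "Suc j \<le> k"
  shows "bad_gap \<delta> (m (Suc j)) * (\<integral>Y. real (visits T (1 - 2 * \<delta>) Y j) \<partial>\<Omega>) \<le> bad_arm_cost \<delta> T (m (Suc j))"
proof (rule bad_gap_mult_le_bad_arm_cost[OF \<delta>])
  show "0 \<le> m (Suc j)" using means j by simp
  show "0 \<le> (\<integral>Y. real (visits T (1 - 2 * \<delta>) Y j) \<partial>\<Omega>)" by simp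
  have "(\<integral>Y. real (visits T (1 - 2 * \<delta>) Y j) \<partial>\<Omega>) \<le> (\<integral>Y. real T \<partial>\<Omega>)"
    by (intro integral_mono integrable_visits integrable_const) (simp add: visits_le)
  then show "(\<integral>Y. real (visits T (1 - 2 * \<delta>) Y j) \<partial>\<Omega>) \<le> real T" using prob_space by simp
  show "(\<integral>Y. real (visits T (1 - 2 * \<delta>) Y j) \<partial>\<Omega>)
      \<le> 1 + (\<Sum>n\<in>{1..T}. exp (- (real n * (1 - 2 * \<delta> - m (Suc j))\<^sup>2 / 2)))"
    if "m (Suc j) < 1 - 3 * \<delta>"
    using expected_visits_le[OF j] that \<delta> by simp
qed

lemma sg_regret_le:
  assumes \<delta>: "0 < \<delta>" and k\<^sub>1: "k\<^sub>1 \<le> k"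
  shows "sg_regret P (2 * \<delta>) k T m \<le> real T * (\<Prod>i<k\<^sub>1. 1 - good_arm_prob P \<delta> (m (Suc i)))
    + 3 * real T * \<delta> + (\<Sum>i<k\<^sub>1. bad_arm_cost \<delta> T (m (Suc i)))"
proof -
  let ?F = "{Y \<in> space \<Omega>. \<forall>i<k\<^sub>1. \<not> good_arm (1 - \<delta>) (1 - 2 * \<delta>) Y i}"
  let ?V = "\<lambda>j Y. real (visits T (1 - 2 * \<delta>) Y j)"
  have F: "?F \<in> events" using measurable_no_good_arm[OF measurable_reward] unfolding pred_def .
  note U = expectation_indicator_plus_sum[OF F integrable_visits, of "real T" "3 * real T * \<delta>"]
  have "sg_regret P (2 * \<delta>) k T m \<le> (\<integral>Y. real T * indicator ?F Y + 3 * real T * \<delta>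
      + (\<Sum>j<k\<^sub>1. bad_gap \<delta> (m (Suc j)) * ?V j Y) \<partial>\<Omega>)"
    unfolding sg_regret_eq_expectation
  proof (rule integral_mono[OF _ U(1)])
    show "integrable \<Omega> (\<lambda>Y. \<Sum>t\<in>{1..T}. Max (m ` {1..k}) - m (sg_arm (2 * \<delta>) k Y t))"
      by (intro Bochner_Integration.integrable_sum Bochner_Integration.integrable_diff integrable_const
          integrable_mean_sg_arm) simp
    show "(\<Sum>t\<in>{1..T}. Max (m ` {1..k}) - m (sg_arm (2 * \<delta>) k Y t))
        \<le> real T * indicator ?F Y + 3 * real T * \<delta> + (\<Sum>j<k\<^sub>1. bad_gap \<delta> (m (Suc j)) * ?V j Y)"
      if "Y \<in> space \<Omega>" for Y
      using cumulative_regret_le[OF \<delta> k\<^sub>1, of Y] that by (simp add: indicator_def)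
  qed
  also have "\<dots> = real T * prob ?F + 3 * real T * \<delta> + (\<Sum>j<k\<^sub>1. bad_gap \<delta> (m (Suc j)) * (\<integral>Y. ?V j Y \<partial>\<Omega>))"
    by (rule U(2))
  also have "\<dots> \<le> real T * (\<Prod>i<k\<^sub>1. 1 - good_arm_prob P \<delta> (m (Suc i)))
      + 3 * real T * \<delta> + (\<Sum>i<k\<^sub>1. bad_arm_cost \<delta> T (m (Suc i)))"
  proof (intro add_mono mult_left_mono order_refl sum_mono)
    show "prob ?F \<le> (\<Prod>i<k\<^sub>1. 1 - good_arm_prob P \<delta> (m (Suc i)))"
      using prob_no_good_arm_le[OF k\<^sub>1, of "1 - \<delta>" "1 - 2 * \<delta>"] by (simp add: good_arm_prob_def)
    show "bad_gap \<delta> (m (Suc j)) * (\<integral>Y. ?V j Y \<partial>\<Omega>) \<le> bad_arm_cost \<delta> T (m (Suc j))"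
      if "j \<in> {..<k\<^sub>1}" for j
      using that k\<^sub>1 by (intro bad_gap_mult_expected_visits_le[OF \<delta>]) simp
  qed simp_all
  finally show ?thesis .
qed

end

section \<open>Averaging over the prior\<close>

lemma bandit_of_kernel:
  assumes kernel: "P \<in> restrict_space borel {0..1} \<rightarrow>\<^sub>M prob_algebra borel"
    and subg: "\<forall>\<mu>\<in>{0..1}. \<forall>s::real. integrable (P \<mu>) (\<lambda>z. exp (s * (z - \<mu>)))
                  \<and> (\<integral>z. exp (s * (z - \<mu>)) \<partial>P \<mu>) \<le> exp (s\<^sup>2 / 2)"
    and "\<And>i. i \<in> {1..k} \<Longrightarrow> m i \<in> {0..1}" "0 < k" "0 < T"
  shows "bandit P k T m"
proof (rule bandit.intro)
  fix \<mu> :: real assume "\<mu> \<in> {0..1}"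
  then have "P \<mu> \<in> space (prob_algebra borel)" by (intro measurable_space[OF kernel]) simp
  then show "prob_space (P \<mu>)" and "sets (P \<mu>) = sets borel" by (simp_all add: space_prob_algebra)
next
  show "subgaussian (P \<mu>) \<mu>" if "\<mu> \<in> {0..1}" for \<mu> using subg that by (simp add: subgaussian_def)
qed (use assms in auto)

lemma integrable_bad_arm_cost:
  assumes "prob_space \<Gamma>" "sets \<Gamma> = sets (restrict_space borel {0..1})" "0 < \<delta>"
  shows "integrable \<Gamma> (bad_arm_cost \<delta> T)"
proof -
  interpret prob_space \<Gamma> by (rule assms(1))
  have "bad_arm_cost \<delta> T \<in> borel_measurable (restrict_space borel {0..1})"
    by (rule measurable_restrict_space1) (unfold bad_arm_cost_def, measurable)
  then have "bad_arm_cost \<delta> T \<in> borel_measurable \<Gamma>"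
    by (simp only: measurable_cong_sets[OF assms(2) refl])
  moreover have "space \<Gamma> = {0..1}" using sets_eq_imp_space_eq[OF assms(2)] by simp
  ultimately show ?thesis
    using bad_arm_cost_bounds[OF assms(3)] by (intro integrable_const_bound[where B = T] AE_I2) auto
qed

lemma sg_regret_le_horizon:
  assumes k: "0 < k" and means: "\<And>i. i \<in> {1..k} \<Longrightarrow> m i \<in> {0..1}"
  shows "sg_regret P \<upsilon> k T m \<le> real T"
proof -
  have "Max (m ` {1..k}) \<le> 1" using k means by (subst Max_le_iff) auto
  then have "real T * Max (m ` {1..k}) \<le> real T" by (simp add: mult_left_le)
  moreover have "0 \<le> (\<Sum>t\<in>{1..T}. \<integral>Y. m (sg_arm \<upsilon> k Y t) \<partial>reward_table P k T m)"
    using sg_arm_in_arms[OF k] means by (intro sum_nonneg Bochner_Integration.integral_nonneg) force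
  ultimately show ?thesis unfolding sg_regret_def by linarith
qed

lemma sg_BR_le_horizon:
  assumes "prob_space \<Gamma>" "space \<Gamma> = {0..1}" "0 < k"
  shows "sg_BR \<Gamma> P \<upsilon> k T \<le> real T"
proof -
  interpret prob_space "\<Pi>\<^sub>M i\<in>{1..k}. \<Gamma>" by (intro prob_space_PiM assms(1))
  have "sg_BR \<Gamma> P \<upsilon> k T \<le> (\<integral>m. real T \<partial>(\<Pi>\<^sub>M i\<in>{1..k}. \<Gamma>))"
    unfolding sg_BR_def
  proof (rule integral_mono'[OF integrable_const])
    fix m assume "m \<in> space (\<Pi>\<^sub>M i\<in>{1..k}. \<Gamma>)"
    then have "m i \<in> {0..1}" if "i \<in> {1..k}" for i using that assms(2) by (auto simp: space_PiM)
    then show "sg_regret P \<upsilon> k T m \<le> real T" by (rule sg_regret_le_horizon[OF assms(3)])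
  qed simp
  then show ?thesis using prob_space by simp
qed

lemma sg_BR_le_prior_bound:
  assumes prior: "prob_space \<Gamma>" and arms: "\<And>m. m \<in> space (\<Pi>\<^sub>M i\<in>{1..k}. \<Gamma>) \<Longrightarrow> bandit P k T m"
    and \<delta>: "0 < \<delta>" and k\<^sub>1: "k\<^sub>1 \<le> k"
    and h: "integrable \<Gamma> (good_arm_prob P \<delta>)" and f: "integrable \<Gamma> (bad_arm_cost \<delta> T)"
  shows "sg_BR \<Gamma> P (2 * \<delta>) k T \<le> real T * (1 - (\<integral>\<mu>. good_arm_prob P \<delta> \<mu> \<partial>\<Gamma>)) ^ k\<^sub>1
    + 3 * real T * \<delta> + real k\<^sub>1 * (\<integral>\<mu>. bad_arm_cost \<delta> T \<mu> \<partial>\<Gamma>)"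
proof -
  interpret prior: prob_space \<Gamma> by (rule prior)
  have g: "integrable \<Gamma> (\<lambda>\<mu>. 1 - good_arm_prob P \<delta> \<mu>)" using h by simp
  note B = prior.integral_iid_prefix[OF k\<^sub>1 f g, of "real T" "3 * real T * \<delta>"]
  have "sg_BR \<Gamma> P (2 * \<delta>) k T \<le> (\<integral>m. real T * (\<Prod>i<k\<^sub>1. 1 - good_arm_prob P \<delta> (m (Suc i)))
      + 3 * real T * \<delta> + (\<Sum>i<k\<^sub>1. bad_arm_cost \<delta> T (m (Suc i))) \<partial>(\<Pi>\<^sub>M i\<in>{1..k}. \<Gamma>))"
    unfolding sg_BR_def
  proof (rule integral_mono'[OF B(1)])
    fix m assume m: "m \<in> space (\<Pi>\<^sub>M i\<in>{1..k}. \<Gamma>)"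
    interpret bandit P k T m by (rule arms[OF m])
    show "sg_regret P (2 * \<delta>) k T m \<le> real T * (\<Prod>i<k\<^sub>1. 1 - good_arm_prob P \<delta> (m (Suc i)))
        + 3 * real T * \<delta> + (\<Sum>i<k\<^sub>1. bad_arm_cost \<delta> T (m (Suc i)))"
      by (rule sg_regret_le[OF \<delta> k\<^sub>1])
    have "0 \<le> (\<Prod>i<k\<^sub>1. 1 - good_arm_prob P \<delta> (m (Suc i)))"
      using k\<^sub>1 good_arm_prob_bounds[OF prob_space_P] means by (intro prod_nonneg) force
    moreover have "0 \<le> (\<Sum>i<k\<^sub>1. bad_arm_cost \<delta> T (m (Suc i)))"
      using k\<^sub>1 bad_arm_cost_bounds(1)[OF \<delta>] means by (intro sum_nonneg) force
    ultimately show "0 \<le> real T * (\<Prod>i<k\<^sub>1. 1 - good_arm_prob P \<delta> (m (Suc i)))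
        + 3 * real T * \<delta> + (\<Sum>i<k\<^sub>1. bad_arm_cost \<delta> T (m (Suc i)))"
      using \<delta> by simp
  qed
  also have "\<dots> = real T * (1 - (\<integral>\<mu>. good_arm_prob P \<delta> \<mu> \<partial>\<Gamma>)) ^ k\<^sub>1
      + 3 * real T * \<delta> + real k\<^sub>1 * (\<integral>\<mu>. bad_arm_cost \<delta> T \<mu> \<partial>\<Gamma>)"
    using B(2) h by (simp add: prior.prob_space)
  finally show ?thesis .
qed

theorem lemma11:
  fixes P :: "real \<Rightarrow> real measure" and \<Gamma> :: "real measure" and g :: "real \<Rightarrow> ennreal"
    and \<delta> :: real and k k\<^sub>1 T :: nat
  assumes prior: "\<Gamma> = density (restrict_space lborel {0..1}) g"
    and g_meas: "g \<in> borel_measurable (restrict_space lborel {0..1})"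
    and prior_prob: "prob_space \<Gamma>"
    and kernel: "P \<in> restrict_space borel {0..1} \<rightarrow>\<^sub>M prob_algebra borel"
    and mean: "\<forall>\<mu>\<in>{0..1}. integrable (P \<mu>) (\<lambda>z. z) \<and> (\<integral>z. z \<partial>P \<mu>) = \<mu>"
    and subg: "\<forall>\<mu>\<in>{0..1}. \<forall>s::real. integrable (P \<mu>) (\<lambda>z. exp (s * (z - \<mu>)))
                  \<and> (\<integral>z. exp (s * (z - \<mu>)) \<partial>P \<mu>) \<le> exp (s\<^sup>2 / 2)"
    and \<delta>_pos: "\<delta> > 0"
    and k1: "1 \<le> k\<^sub>1" "k\<^sub>1 \<le> k"
  shows "sg_BR \<Gamma> P (2 * \<delta>) k T
    \<le> real T * (1 - (\<integral>\<mu>. indicator {1 - \<delta>..} \<mu> * q_prob P (1 - 2 * \<delta>) \<mu> \<partial>\<Gamma>)) ^ k\<^sub>1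
       + 3 * real T * \<delta>
       + real k\<^sub>1 * (\<integral>\<mu>. (if \<mu> < 1 - 3 * \<delta>
            then min (1 + 3 / (((1 - exp (-1)) / 2) * (1 - 2 * \<delta> - \<mu>))) (real T * (1 - \<mu>))
            else 0) \<partial>\<Gamma>)"
proof -
  have space: "space \<Gamma> = {0..1}" using prior by simp
  have "sg_BR \<Gamma> P (2 * \<delta>) k T \<le> real T * (1 - (\<integral>\<mu>. good_arm_prob P \<delta> \<mu> \<partial>\<Gamma>)) ^ k\<^sub>1
      + 3 * real T * \<delta> + real k\<^sub>1 * (\<integral>\<mu>. bad_arm_cost \<delta> T \<mu> \<partial>\<Gamma>)"
  proof (cases "0 < T \<and> integrable \<Gamma> (good_arm_prob P \<delta>)")
    case True
    have "bandit P k T m" if "m \<in> space (\<Pi>\<^sub>M i\<in>{1..k}. \<Gamma>)" for m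
      using that space k1 True by (intro bandit_of_kernel[OF kernel subg]) (auto simp: space_PiM)
    moreover have "integrable \<Gamma> (bad_arm_cost \<delta> T)"
      using prior prior_prob \<delta>_pos by (intro integrable_bad_arm_cost) (simp_all add: sets_restrict_space)
    ultimately show ?thesis using sg_BR_le_prior_bound[OF prior_prob _ \<delta>_pos k1(2)] True by blast
  next
    \<comment> \<open>\<open>q_prob P \<theta>\<close> is not known to be measurable in \<open>\<mu>\<close>; if it is not integrable, its
      integral is the junk value 0 and the trivial bound \<open>T\<close> on the regret suffices.\<close>
    case False
    have "real T \<le> real T * (1 - (\<integral>\<mu>. good_arm_prob P \<delta> \<mu> \<partial>\<Gamma>)) ^ k\<^sub>1"
      using False by (cases "T = 0") (simp_all add: not_integrable_integral_eq)
    moreover have "0 \<le> real k\<^sub>1 * (\<integral>\<mu>. bad_arm_cost \<delta> T \<mu> \<partial>\<Gamma>)"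
      using bad_arm_cost_bounds(1)[OF \<delta>_pos] space by (intro mult_nonneg_nonneg Bochner_Integration.integral_nonneg) auto
    moreover have "0 \<le> 3 * real T * \<delta>" using \<delta>_pos by simp
    moreover have "sg_BR \<Gamma> P (2 * \<delta>) k T \<le> real T"
      using k1 by (intro sg_BR_le_horizon[OF prior_prob space]) simp
    ultimately show ?thesis by linarith
  qed
  then show ?thesis by (simp only: good_arm_prob_def bad_arm_cost_def)
qed

end
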